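(* Let $n\ge 2$. For every $T\in\underline{E}_n$, the sequence $\mathsf r^T$ is a tree-like factorization of $\lambda_n$, and the map $T\mapsto \mathsf r^T$ is a bijection from $\underline{E}_n$ onto the set of tree-like factorizations of $\lambda_n$.
   Context: The affine symmetric group $\widetilde S_n$ is the group, under composition, of bijections $w:\mathbb Z\to\mathbb Z$ with $w(i+n)=w(i)+n$ and $\sum_{i=1}^n w(i)=\binom{n+1}{2}$. For $i\not\equiv j\pmod n$, $(\!(i,j)\!)$ is the affine reflection interchanging $i+kn$ and $j+kn$ for all $k\in\mathbb Z$; $(\!(i,j)\!)=(\!(j,i)\!)=(\!(i+kn,j+kn)\!)$. Let $\lambda_n$ be the element with $\lambda_n(k)=k+n$ for $k\not\equiv0\pmod n$ and $\lambda_n(k)=k-n(n-1)$ for $k\equiv 0\pmod n$; its reflection length is $2n-2$. $\textsc{fact}(\lambda_n)$ is the set of sequences $[r_1,\dots,r_{2n-2}]$ of reflections with $r_1\cdots r_{2n-2}=\lambda_n$. Such a sequence is tree-like if one can write $r_k=(\!(a_{k-1},b_k)\!)$ with integers $a_{k-1}<b_k$ ($1\le k\le 2n-2$) and $a_k\equiv b_k\pmod n$ ($1\le k\le 2n-3$). $\underline{E}_n$ is the set of plane-embedded trees with vertex set $[n]=\{1,\dots,n\}$ together with a marked edge incident to the vertex $n$, considered up to orientation-preserving homeomorphism of the plane. For $T\in\underline E_n$, perform the clockwise walk around $T$: start at $n$ and traverse the marked edge first; thereafter, upon arriving at a vertex $v$ along an edge $e$, leave along the edge immediately following $e$ in the clockwise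 order of edges around $v$ (at a leaf this is $e$ itself). This walk traverses every edge exactly twice and visits vertices $v_0=n,v_1,\dots,v_{2n-2}=n$. Define $\mathsf r^T=[t_1,\dots,t_{2n-2}]$ where $t_k=(\!(v_{k-1},v_k)\!)$ if $v_{k-1}<v_k$ and $t_k=(\!(v_{k-1}-n,v_k)\!)$ if $v_{k-1}>v_k$. *)

theory Defs
  imports Main
begin

text \<open>The affine reflection ((i,j)) in the affine symmetric group on n letters,
  as a bijection of the integers: it interchanges i+kn and j+kn for all k.\<close>
definition aff_refl :: "nat \<Rightarrow> int \<Rightarrow> int \<Rightarrow> (int \<Rightarrow> int)" where
  "aff_refl n i j = (\<lambda>x. if x mod int n = i mod int n then x + (j - i)
                          else if x mod int n = j mod int n then x - (j - i)
                          else x)"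

definition aff_reflections :: "nat \<Rightarrow> (int \<Rightarrow> int) set" where
  "aff_reflections n = {aff_refl n i j | i j. i mod int n \<noteq> j mod int n}"

definition lambda_n :: "nat \<Rightarrow> (int \<Rightarrow> int)" where
  "lambda_n n = (\<lambda>k. if k mod int n = 0 then k - int n * (int n - 1) else k + int n)"

definition prod_refl :: "(int \<Rightarrow> int) list \<Rightarrow> (int \<Rightarrow> int)" where
  "prod_refl rs = foldr (\<circ>) rs id"

text \<open>fact(lambda_n): factorizations of lambda_n into 2n-2 reflections
  (2n-2 being the reflection length of lambda_n).\<close>
definition fact_lambda :: "nat \<Rightarrow> (int \<Rightarrow> int) list set" where
  "fact_lambda n = {rs. length rs = 2 * n - 2 \<and> set rs \<subseteq> aff_reflections n
                        \<and> prod_refl rs = lambda_n n}"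

text \<open>Tree-like sequences: r_k = ((a_{k-1}, b_k)) with a_{k-1} < b_k (k = 1..2n-2)
  and a_k = b_k mod n (k = 1..2n-3). (List index k-1 holds r_k.)\<close>
definition tree_like :: "nat \<Rightarrow> (int \<Rightarrow> int) list \<Rightarrow> bool" where
  "tree_like n rs \<longleftrightarrow> length rs = 2 * n - 2 \<and>
     (\<exists>a b :: nat \<Rightarrow> int.
        (\<forall>k \<in> {1..2*n-2}. a (k-1) < b k \<and> a (k-1) mod int n \<noteq> b k mod int n
                          \<and> rs ! (k-1) = aff_refl n (a (k-1)) (b k)) \<and>
        (\<forall>k \<in> {1..2*n-3}. a k mod int n = b k mod int n))"

text \<open>A plane embedding of a tree with labelled vertices, up to orientation-preserving
  homeomorphism, is encoded by its rotation system: for every vertex v, the cyclic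
  (clockwise) order of the edges at v. Edges at v are identified with darts (v,u),
  {v,u} an edge; rho (v,u) is the dart at v immediately following (v,u) in the
  clockwise order around v. rho is the identity outside the darts (canonical form).
  An element of E_n is a triple (edge set, rotation, other endpoint m of the marked
  edge {n,m}).\<close>

definition darts :: "nat set set \<Rightarrow> (nat \<times> nat) set" where
  "darts E = {(a, b). {a, b} \<in> E}"

definition is_tree_on :: "nat \<Rightarrow> nat set set \<Rightarrow> bool" where
  "is_tree_on n E \<longleftrightarrow>
     E \<subseteq> {{a, b} | a b. a \<in> {1..n} \<and> b \<in> {1..n} \<and> a \<noteq> b} \<and>
     card E = n - 1 \<and>
     (\<forall>v \<in> {1..n}. (n, v) \<in> {(a, b). {a, b} \<in> E}\<^sup>*)"

definition is_rotation_system :: "nat set set \<Rightarrow> (nat \<times> nat \<Rightarrow> nat \<times> nat) \<Rightarrow> bool" where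
  "is_rotation_system E \<rho> \<longleftrightarrow>
     bij_betw \<rho> (darts E) (darts E) \<and>
     (\<forall>d. d \<notin> darts E \<longrightarrow> \<rho> d = d) \<and>
     (\<forall>d \<in> darts E. fst (\<rho> d) = fst d) \<and>
     (\<forall>d \<in> darts E. \<forall>d' \<in> darts E. fst d = fst d' \<longrightarrow> (\<exists>k. (\<rho> ^^ k) d = d'))"

definition E_marked :: "nat \<Rightarrow> (nat set set \<times> (nat \<times> nat \<Rightarrow> nat \<times> nat) \<times> nat) set" where
  "E_marked n = {(E, \<rho>, m). is_tree_on n E \<and> is_rotation_system E \<rho> \<and> {n, m} \<in> E}"

text \<open>The first traversed edge is the
  marked one, from n to m; arriving at v from u, leave along the edge following {v,u}
  in the clockwise order around v.\<close>
fun walk_dart :: "nat \<Rightarrow> (nat \<times> nat \<Rightarrow> nat \<times> nat) \<Rightarrow> nat \<Rightarrow> nat \<Rightarrow> nat \<times> nat" where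
  "walk_dart n \<rho> m 0 = (n, m)"
| "walk_dart n \<rho> m (Suc k) =
     (let (u, v) = walk_dart n \<rho> m k in (v, snd (\<rho> (v, u))))"

text \<open>walk_dart n rho m (k-1) = (v_{k-1}, v_k). The sequence r^T.\<close>
definition r_T :: "nat \<Rightarrow> (nat set set \<times> (nat \<times> nat \<Rightarrow> nat \<times> nat) \<times> nat) \<Rightarrow> (int \<Rightarrow> int) list" where
  "r_T n T = (case T of (E, \<rho>, m) \<Rightarrow>
     map (\<lambda>k. let (u, v) = walk_dart n \<rho> m k in
               if u < v then aff_refl n (int u) (int v)
               else aff_refl n (int u - int n) (int v))
         [0..<2 * n - 2])"

end

theory Submission
  imports Defs
begin

(* Both sides are matched with the contour walks v_0 = n, v_1, ..., v_{2n-2} = n of trees on [n]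
   rooted at n.

   Write a tree-like factorization of lambda_n as ((c_0, c_1)), ..., ((c_{2n-3}, c_{2n-2})) with
   a single increasing chain c, and let v_k be the class of c_k modulo n. Following a residue x
   in [n-1] through the product from right to left, the factor ((c_i, c_{i+1})) lifts it by
   c_{i+1} - c_i, a number in (0, n), exactly when it lies in the class of c_i. Since lambda_n
   lifts x by n and there are only 2(n-1) factors, every x is lifted exactly twice. This says
   that v enters x once from some b(x), avoids b(x) until it returns there, and visits x only in
   between: v is the contour walk of the tree with edges {x, b(x)}, and it is the clockwise walk
   for the rotation that follows it.

   Conversely, the clockwise walk around a plane tree is a contour walk, because every edge is a
   bridge and the rotation at each vertex is cyclic; its lift is a tree-like factorization, and
   the walk, hence r^T, determines the tree, its rotation and its marked edge. *)

section \<open>Affine reflections and their products\<close>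

lemma aff_refl_cong:
  assumes "i' mod int n = i mod int n" "j' - i' = j - i"
  shows "aff_refl n i' j' = aff_refl n i j"
proof -
  have "j' mod int n = j mod int n"
    using assms by (metis add.commute diff_add_cancel mod_add_cong)
  then show ?thesis using assms unfolding aff_refl_def by auto
qed

lemma aff_refl_periodic: "aff_refl n i j (x + t * int n) = aff_refl n i j x + t * int n"
  unfolding aff_refl_def by simp

lemma aff_refl_apply_first:
  "i mod int n \<noteq> j mod int n \<Longrightarrow> x mod int n = i mod int n \<Longrightarrow> aff_refl n i j x = x + (j - i)"
  unfolding aff_refl_def by auto

lemma aff_refl_apply_second:
  "i mod int n \<noteq> j mod int n \<Longrightarrow> x mod int n = j mod int n \<Longrightarrow> aff_refl n i j x = x - (j - i)"
  unfolding aff_refl_def by auto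

lemma aff_refl_apply_other:
  "x mod int n \<noteq> i mod int n \<Longrightarrow> x mod int n \<noteq> j mod int n \<Longrightarrow> aff_refl n i j x = x"
  unfolding aff_refl_def by auto

lemma aff_refl_involutive:
  assumes "i mod int n \<noteq> j mod int n"
  shows "aff_refl n i j (aff_refl n i j x) = x"
proof -
  consider "x mod int n = i mod int n"
    | "x mod int n \<noteq> i mod int n" "x mod int n = j mod int n"
    | "x mod int n \<noteq> i mod int n" "x mod int n \<noteq> j mod int n" by blast
  then show ?thesis
  proof cases
    case 1
    then have "(x + (j - i)) mod int n = j mod int n"
      by (metis add.commute diff_add_cancel mod_add_cong)
    then show ?thesis using 1 assms unfolding aff_refl_def by auto
  next
    case 2
    then have "(x - (j - i)) mod int n = i mod int n"
      by (metis diff_diff_eq2 diff_add_cancel mod_diff_cong add_diff_cancel_left')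
    then show ?thesis using 2 assms unfolding aff_refl_def by auto
  next
    case 3
    then show ?thesis unfolding aff_refl_def by auto
  qed
qed

lemma bij_aff_refl: "i mod int n \<noteq> j mod int n \<Longrightarrow> bij (aff_refl n i j)"
  by (metis aff_refl_involutive bij_betw_imageI inj_on_inverseI surj_def)

lemma aff_refl_increases_iff:
  assumes "i < j" "i mod int n \<noteq> j mod int n"
  shows "y < aff_refl n i j y \<longleftrightarrow> y mod int n = i mod int n"
  using assms unfolding aff_refl_def by auto

lemma aff_refl_decreases_iff:
  assumes "i < j" "i mod int n \<noteq> j mod int n"
  shows "aff_refl n i j y < y \<longleftrightarrow> y mod int n = j mod int n"
  using assms unfolding aff_refl_def by auto

lemma prod_refl_Nil [simp]: "prod_refl [] = id"
  unfolding prod_refl_def by simp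

lemma prod_refl_Cons [simp]: "prod_refl (r # rs) = r \<circ> prod_refl rs"
  unfolding prod_refl_def by simp

lemma prod_refl_periodic:
  assumes "set rs \<subseteq> aff_reflections n"
  shows "prod_refl rs (x + t * int n) = prod_refl rs x + t * int n"
  using assms
proof (induction rs arbitrary: x)
  case Nil
  then show ?case by simp
next
  case (Cons r rs)
  then obtain i j where "r = aff_refl n i j" unfolding aff_reflections_def by auto
  with Cons show ?case by (simp add: aff_refl_periodic)
qed

lemma bij_prod_refl:
  assumes "set rs \<subseteq> aff_reflections n"
  shows "bij (prod_refl rs)"
  using assms
proof (induction rs)
  case Nil
  then show ?case using bij_id by (simp add: id_def)
next
  case (Cons r rs)
  then obtain i j where r: "r = aff_refl n i j" "i mod int n \<noteq> j mod int n"
    unfolding aff_reflections_def by auto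
  have "bij (aff_refl n i j \<circ> prod_refl rs)"
    using Cons bij_aff_refl[OF r(2)] by (intro bij_comp) auto
  then show ?case by (simp add: r comp_def)
qed

lemma prod_refl_mod_eq_iff:
  assumes rs: "set rs \<subseteq> aff_reflections n" and "n > 0"
  shows "prod_refl rs x mod int n = prod_refl rs y mod int n \<longleftrightarrow> x mod int n = y mod int n"
proof
  assume "prod_refl rs x mod int n = prod_refl rs y mod int n"
  then obtain k where "prod_refl rs y - prod_refl rs x = int n * k"
    by (metis mod_eq_dvd_iff dvd_def)
  then have "prod_refl rs y = prod_refl rs x + k * int n" by (simp add: algebra_simps)
  then have "prod_refl rs y = prod_refl rs (x + k * int n)"
    using prod_refl_periodic[OF rs] by simp
  then have "y = x + k * int n"
    using bij_prod_refl[OF rs] by (metis bij_is_inj injD)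
  then show "x mod int n = y mod int n" by simp
next
  assume "x mod int n = y mod int n"
  then obtain k where "y - x = int n * k"
    by (metis mod_eq_dvd_iff dvd_def)
  then have "y = x + k * int n" by (simp add: algebra_simps)
  then show "prod_refl rs x mod int n = prod_refl rs y mod int n"
    using prod_refl_periodic[OF rs] by simp
qed

lemma mod_eq_iff_eq_in_range:
  assumes "a \<in> {1..n}" "b \<in> {1..n}"
  shows "int a mod int n = int b mod int n \<longleftrightarrow> a = b"
proof -
  have h: "int a mod int n = (if a = n then 0 else int a)" if "a \<in> {1..n}" for a
    using that by auto
  show ?thesis using h[OF assms(1)] h[OF assms(2)] assms by (auto split: if_splits)
qed

lemma pos_add_eq_if_mod_eq_0:
  fixes a b N :: int
  assumes "0 < a" "a < N" "0 < b" "b < N" "(a + b) mod N = 0"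
  shows "a + b = N"
proof (cases "a + b < N")
  case True
  then have "(a + b) mod N = a + b" using assms by (intro mod_pos_pos_trivial) auto
  then show ?thesis using assms by simp
next
  case False
  have "(a + b) mod N = (a + b - N) mod N" by (simp add: mod_diff_right_eq[symmetric])
  also have "\<dots> = a + b - N" using assms False by (intro mod_pos_pos_trivial) auto
  finally show ?thesis using assms by simp
qed

definition class_vertex :: "nat \<Rightarrow> int \<Rightarrow> nat" where
  "class_vertex n z = nat ((z - 1) mod int n) + 1"

lemma class_vertex_in_range:
  assumes "n > 0"
  shows "class_vertex n z \<in> {1..n}"
proof -
  have "nat ((z - 1) mod int n) < n" using assms by (simp add: nat_less_iff)
  then show ?thesis unfolding class_vertex_def by simp
qed

lemma class_vertex_mod:
  assumes "n > 0"
  shows "int (class_vertex n z) mod int n = z mod int n"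
proof -
  have "int (class_vertex n z) = (z - 1) mod int n + 1"
    using assms unfolding class_vertex_def by simp
  then have "int (class_vertex n z) mod int n = ((z - 1) mod int n + 1) mod int n" by simp
  also have "\<dots> = z mod int n" by (simp add: mod_add_left_eq)
  finally show ?thesis .
qed

lemma class_vertex_eq_iff:
  assumes "n > 0" "w \<in> {1..n}"
  shows "class_vertex n z = w \<longleftrightarrow> z mod int n = int w mod int n"
  using mod_eq_iff_eq_in_range[OF class_vertex_in_range[OF assms(1)] assms(2)]
    class_vertex_mod[OF assms(1)] by metis

lemma class_vertex_eq_class_vertex_iff:
  "n > 0 \<Longrightarrow> class_vertex n z = class_vertex n z' \<longleftrightarrow> z mod int n = z' mod int n"
  using class_vertex_eq_iff class_vertex_in_range class_vertex_mod by metis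

text \<open>The reflection contributed to \<open>r\<^sup>T\<close> by a step of the walk from \<open>u\<close> to \<open>w\<close>.\<close>

definition step_refl :: "nat \<Rightarrow> nat \<Rightarrow> nat \<Rightarrow> (int \<Rightarrow> int)" where
  "step_refl n u w =
     (if u < w then aff_refl n (int u) (int w) else aff_refl n (int u - int n) (int w))"

lemma aff_refl_eq_step_refl:
  assumes "n > 0" "u \<in> {1..n}" "w \<in> {1..n}" "u \<noteq> w" "i mod int n = int u mod int n"
    "j - i = (int w - int u) mod int n"
  shows "aff_refl n i j = step_refl n u w"
proof (cases "u < w")
  case True
  then have "(int w - int u) mod int n = int w - int u"
    using assms(2,3) by (intro mod_pos_pos_trivial) auto
  then show ?thesis
    using True assms aff_refl_cong[of i n "int u" j "int w"] unfolding step_refl_def by simp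
next
  case False
  then have "w < u" using assms(4) by simp
  have "(int w - int u) mod int n = (int w - int u + int n) mod int n" by simp
  also have "\<dots> = int w - int u + int n"
    using \<open>w < u\<close> assms(2,3) by (intro mod_pos_pos_trivial) auto
  finally have "(int w - int u) mod int n = int w - int u + int n" .
  moreover have "i mod int n = (int u - int n) mod int n" using assms(5) by simp
  ultimately show ?thesis
    using False assms(6) aff_refl_cong[of i n "int u - int n" j "int w"]
    unfolding step_refl_def by simp
qed

lemma step_refl_as_aff_refl:
  assumes "u \<in> {1..n}" "w \<in> {1..n}" "u \<noteq> w"
  obtains i j where "step_refl n u w = aff_refl n i j" "i < j"
    "i mod int n = int u mod int n" "j mod int n = int w mod int n" "i mod int n \<noteq> j mod int n"
proof -
  have ne: "int u mod int n \<noteq> int w mod int n"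
    using mod_eq_iff_eq_in_range[OF assms(1,2)] assms(3) by simp
  show ?thesis
  proof (cases "u < w")
    case True
    then show ?thesis using ne that[of "int u" "int w"] unfolding step_refl_def by simp
  next
    case False
    have "(int u - int n) mod int n = int u mod int n" by simp
    then show ?thesis using False ne assms that[of "int u - int n" "int w"]
      unfolding step_refl_def by simp
  qed
qed

text \<open>\<open>u\<close> is the class the reflection moves up, \<open>w\<close> the class it moves down.\<close>

lemma step_refl_inj:
  assumes "u \<in> {1..n}" "w \<in> {1..n}" "u \<noteq> w" "u' \<in> {1..n}" "w' \<in> {1..n}" "u' \<noteq> w'"
    and eq: "step_refl n u w = step_refl n u' w'"
  shows "u = u' \<and> w = w'"
proof -
  obtain i j where ij: "step_refl n u w = aff_refl n i j" "i < j" "i mod int n = int u mod int n"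
    "j mod int n = int w mod int n" "i mod int n \<noteq> j mod int n"
    using step_refl_as_aff_refl[OF assms(1-3)] by blast
  obtain i' j' where ij': "step_refl n u' w' = aff_refl n i' j'" "i' < j'"
    "i' mod int n = int u' mod int n" "j' mod int n = int w' mod int n"
    "i' mod int n \<noteq> j' mod int n"
    using step_refl_as_aff_refl[OF assms(4-6)] by blast
  have "int u < aff_refl n i' j' (int u)"
    using aff_refl_increases_iff[OF ij(2,5)] ij(1,3) eq ij'(1) by simp
  then have "u = u'"
    using aff_refl_increases_iff[OF ij'(2,5)] ij'(3) mod_eq_iff_eq_in_range[OF assms(1,4)] by simp
  moreover have "aff_refl n i' j' (int w) < int w"
    using aff_refl_decreases_iff[OF ij(2,5)] ij(1,4) eq ij'(1) by simp
  then have "w = w'"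
    using aff_refl_decreases_iff[OF ij'(2,5)] ij'(4) mod_eq_iff_eq_in_range[OF assms(2,5)] by simp
  ultimately show ?thesis by simp
qed

section \<open>Increasing chains of reflections\<close>

locale increasing_chain =
  fixes n :: nat and c :: "nat \<Rightarrow> int"
  assumes n_ge_2: "2 \<le> n"
    and chain_less: "\<And>i. i < 2*n-2 \<Longrightarrow> c i < c (Suc i)"
    and chain_mod_ne: "\<And>i. i < 2*n-2 \<Longrightarrow> c i mod int n \<noteq> c (Suc i) mod int n"
begin

abbreviation "m \<equiv> 2*n-2"

definition chain_refl where "chain_refl i = aff_refl n (c i) (c (Suc i))"
definition suffix_prod where "suffix_prod k = prod_refl (map chain_refl [k..<m])"
definition gap where "gap i = c (Suc i) - c i"

lemma n_pos: "n > 0"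
  using n_ge_2 by simp

lemma suffix_refls_in_aff_reflections: "set (map chain_refl [k..<m]) \<subseteq> aff_reflections n"
  using chain_mod_ne by (fastforce simp: chain_refl_def aff_reflections_def)

lemma suffix_prod_m: "suffix_prod m = id"
  unfolding suffix_prod_def by simp

lemma suffix_prod_step: "k < m \<Longrightarrow> suffix_prod k x = chain_refl k (suffix_prod (Suc k) x)"
  unfolding suffix_prod_def by (simp add: upt_conv_Cons)

lemma suffix_prod_mod_eq_iff:
  "suffix_prod k x mod int n = suffix_prod k y mod int n \<longleftrightarrow> x mod int n = y mod int n"
  unfolding suffix_prod_def by (rule prod_refl_mod_eq_iff[OF suffix_refls_in_aff_reflections n_pos])

lemma chain_strict_mono: "i < j \<Longrightarrow> j \<le> m \<Longrightarrow> c i < c j"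
proof (induction j)
  case 0
  then show ?case by simp
next
  case (Suc j)
  then show ?case using chain_less[of j] by (cases "i = j") auto
qed

lemma gap_pos: "i < m \<Longrightarrow> 0 < gap i"
  using chain_less unfolding gap_def by simp

lemma gap_mod_ne_0: "i < m \<Longrightarrow> gap i mod int n \<noteq> 0"
  using chain_mod_ne unfolding gap_def
  by (simp add: mod_eq_dvd_iff dvd_eq_mod_eq_0[symmetric]) (metis dvd_minus_iff minus_diff_eq)

lemma suffix_prod_last_class:
  "x mod int n = c m mod int n \<Longrightarrow> k \<le> m \<Longrightarrow> suffix_prod k x = x - (c m - c k)"
proof (induction "m - k" arbitrary: k)
  case 0
  then have "k = m" by simp
  then show ?case by (simp add: suffix_prod_m)
next
  case (Suc j)
  then have k: "k < m" by simp
  have IH: "suffix_prod (Suc k) x = x - (c m - c (Suc k))" using Suc by simp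
  have "(x - (c m - c (Suc k))) mod int n = c (Suc k) mod int n"
    using Suc.prems(1) by (simp add: mod_eq_dvd_iff algebra_simps)
  then have "chain_refl k (x - (c m - c (Suc k))) = x - (c m - c (Suc k)) - (c (Suc k) - c k)"
    unfolding chain_refl_def using chain_mod_ne[OF k] by (intro aff_refl_apply_second) auto
  then show ?case using suffix_prod_step[OF k] IH by simp
qed

end

text \<open>The contour walks, rooted at \<open>n\<close>, of the trees on \<open>[n]\<close> with the edges \<open>{x, parent x}\<close>.\<close>

locale contour_walk =
  fixes n :: nat and v :: "nat \<Rightarrow> nat" and leave enter parent :: "nat \<Rightarrow> nat"
  assumes n_ge_2: "2 \<le> n"
    and walk_in_range: "\<And>k. k \<le> 2*n-2 \<Longrightarrow> v k \<in> {1..n}"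
    and walk_start: "v 0 = n"
    and walk_end: "v (2*n-2) = n"
    and walk_step_ne: "\<And>i. i < 2*n-2 \<Longrightarrow> v i \<noteq> v (Suc i)"
    and enter_less_leave: "\<And>x. x \<in> {1..<n} \<Longrightarrow> enter x < leave x \<and> leave x < 2*n-2"
    and walk_at_leave: "\<And>x. x \<in> {1..<n} \<Longrightarrow> v (leave x) = x \<and> v (Suc (leave x)) = parent x"
    and walk_at_enter: "\<And>x. x \<in> {1..<n} \<Longrightarrow> v (enter x) = parent x \<and> v (Suc (enter x)) = x"
    and vertex_outside:
      "\<And>x k. x \<in> {1..<n} \<Longrightarrow> k \<le> 2*n-2 \<Longrightarrow> k \<le> enter x \<or> Suc (leave x) \<le> k \<Longrightarrow> v k \<noteq> x"
    and parent_inside: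
      "\<And>x k. x \<in> {1..<n} \<Longrightarrow> Suc (enter x) \<le> k \<Longrightarrow> k \<le> leave x \<Longrightarrow> v k \<noteq> parent x"

locale lambda_chain = increasing_chain +
  assumes chain_prod: "prod_refl (map (\<lambda>i. aff_refl n (c i) (c (Suc i))) [0..<2*n-2]) = lambda_n n"
begin

lemma suffix_prod_0: "suffix_prod 0 = lambda_n n"
  using chain_prod unfolding suffix_prod_def chain_refl_def by simp

lemma last_class_zero: "c m mod int n = 0" and chain_span: "c 0 = c m - int n * (int n - 1)"
proof -
  have "suffix_prod 0 (c m) = c 0" using suffix_prod_last_class[of "c m" 0] by simp
  then have h: "lambda_n n (c m) = c 0" using suffix_prod_0 by simp
  have "c 0 < c m" using chain_strict_mono[of 0 m] n_ge_2 by simp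
  show "c m mod int n = 0"
  proof (rule ccontr)
    assume "c m mod int n \<noteq> 0"
    then have "lambda_n n (c m) = c m + int n" unfolding lambda_n_def by simp
    then show False using h \<open>c 0 < c m\<close> by simp
  qed
  then show "c 0 = c m - int n * (int n - 1)" using h unfolding lambda_n_def by simp
qed

lemma first_class_zero: "c 0 mod int n = 0"
proof -
  have "c 0 = c m + (- (int n - 1)) * int n" using chain_span by (simp add: algebra_simps)
  then have "c 0 mod int n = c m mod int n" by simp
  then show ?thesis using last_class_zero by simp
qed

lemma suffix_prod_mod_ne:
  assumes "x mod int n \<noteq> 0" "k \<le> m"
  shows "suffix_prod k x mod int n \<noteq> c k mod int n"
proof
  assume "suffix_prod k x mod int n = c k mod int n"
  moreover have "suffix_prod k (c m) = c k"
    using suffix_prod_last_class[of "c m" k] assms(2) by simp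
  ultimately have "x mod int n = c m mod int n" using suffix_prod_mod_eq_iff by metis
  then show False using assms(1) last_class_zero by simp
qed

text \<open>Read from right to left, the product lifts a residue \<open>x \<noteq> 0\<close> by \<open>gap i\<close> at each step
  \<open>i \<in> moves x\<close> and never lowers it.\<close>

definition moves where "moves x = {i. i < m \<and> suffix_prod (Suc i) x mod int n = c i mod int n}"

lemma finite_moves: "finite (moves x)"
  unfolding moves_def by simp

lemma suffix_prod_Suc:
  assumes "x mod int n \<noteq> 0" "k < m"
  shows "suffix_prod k x = suffix_prod (Suc k) x + (if k \<in> moves x then gap k else 0)"
proof -
  have ne: "suffix_prod (Suc k) x mod int n \<noteq> c (Suc k) mod int n"
    using suffix_prod_mod_ne assms by simp
  show ?thesis
  proof (cases "k \<in> moves x")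
    case True
    then have "suffix_prod (Suc k) x mod int n = c k mod int n" unfolding moves_def by simp
    then show ?thesis using True suffix_prod_step[OF assms(2)] chain_mod_ne[OF assms(2)]
      unfolding chain_refl_def gap_def by (simp add: aff_refl_apply_first)
  next
    case False
    then have "suffix_prod (Suc k) x mod int n \<noteq> c k mod int n"
      using assms(2) unfolding moves_def by simp
    then show ?thesis using False suffix_prod_step[OF assms(2)] ne
      unfolding chain_refl_def by (simp add: aff_refl_apply_other)
  qed
qed

lemma suffix_prod_eq_sum_gaps:
  "x mod int n \<noteq> 0 \<Longrightarrow> k \<le> m \<Longrightarrow> suffix_prod k x = x + (\<Sum>i\<in>{i\<in>moves x. k \<le> i}. gap i)"
proof (induction "m - k" arbitrary: k)
  case 0
  then have k: "k = m" by simp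
  have none: "{i\<in>moves x. m \<le> i} = {}" unfolding moves_def by auto
  show ?case by (simp add: k none suffix_prod_m)
next
  case (Suc j)
  then have k: "k < m" by simp
  have IH: "suffix_prod (Suc k) x = x + (\<Sum>i\<in>{i\<in>moves x. Suc k \<le> i}. gap i)"
    using Suc by simp
  show ?case
  proof (cases "k \<in> moves x")
    case True
    then have "{i\<in>moves x. k \<le> i} = insert k {i\<in>moves x. Suc k \<le> i}" by auto
    then show ?thesis using suffix_prod_Suc[OF Suc.prems(1) k] IH True finite_moves by simp
  next
    case False
    then have "{i\<in>moves x. k \<le> i} = {i\<in>moves x. Suc k \<le> i}"
      by (auto simp: Suc_le_eq) (metis le_neq_implies_less)
    then show ?thesis using suffix_prod_Suc[OF Suc.prems(1) k] IH False by simp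
  qed
qed

lemma sum_gaps_moves: "x \<in> {1..<n} \<Longrightarrow> (\<Sum>i\<in>moves (int x). gap i) = int n"
  using suffix_prod_eq_sum_gaps[of "int x" 0] suffix_prod_0 unfolding lambda_n_def by simp

lemma step_in_moves: "i < m \<Longrightarrow> \<exists>x\<in>{1..<n}. i \<in> moves (int x)"
proof -
  assume i: "i < m"
  obtain y where y: "suffix_prod (Suc i) y = c i"
    using bij_prod_refl[OF suffix_refls_in_aff_reflections] unfolding suffix_prod_def
    by (metis bij_pointE)
  have y0: "y mod int n \<noteq> 0"
  proof
    assume "y mod int n = 0"
    then have "c i = c (Suc i) + (y - c m)"
      using y suffix_prod_last_class[of y "Suc i"] last_class_zero i by simp
    moreover have "int n dvd (y - c m)"
      using \<open>y mod int n = 0\<close> last_class_zero by (simp add: mod_eq_dvd_iff[symmetric])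
    ultimately have "c i mod int n = c (Suc i) mod int n"
      by (metis add.right_neutral dvd_imp_mod_0 mod_add_right_eq)
    then show False using chain_mod_ne[OF i] by simp
  qed
  define x where "x = nat (y mod int n)"
  have ix: "int x = y mod int n" unfolding x_def using n_pos by simp
  have "y mod int n < int n" using n_pos by simp
  then have "x \<in> {1..<n}" using y0 ix by auto
  moreover have "suffix_prod (Suc i) (int x) mod int n = suffix_prod (Suc i) y mod int n"
    using suffix_prod_mod_eq_iff ix by simp
  then have "i \<in> moves (int x)" using y i unfolding moves_def by simp
  ultimately show ?thesis by blast
qed

lemma moves_disjoint:
  assumes "i \<in> moves (int x)" "i \<in> moves (int y)" "x \<in> {1..<n}" "y \<in> {1..<n}"
  shows "x = y"
proof -
  have "suffix_prod (Suc i) (int x) mod int n = suffix_prod (Suc i) (int y) mod int n"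
    using assms unfolding moves_def by simp
  then show ?thesis using assms(3,4) suffix_prod_mod_eq_iff by simp
qed

lemma sum_card_moves: "(\<Sum>x\<in>{1..<n}. card (moves (int x))) = m"
proof -
  have "(\<Union>x\<in>{1..<n}. moves (int x)) = {..<m}"
    using step_in_moves unfolding moves_def by auto
  moreover have "card (\<Union>x\<in>{1..<n}. moves (int x)) = (\<Sum>x\<in>{1..<n}. card (moves (int x)))"
    by (rule card_UN_disjoint) (auto simp: finite_moves dest: moves_disjoint)
  ultimately show ?thesis by simp
qed

text \<open>The gaps are positive non-multiples of \<open>n\<close> and sum to \<open>n\<close> over \<open>moves x\<close>, so \<open>x\<close> is
  moved at least twice; the \<open>2(n - 1)\<close> steps are shared by \<open>n - 1\<close> residues.\<close>

lemma two_le_card_moves: "x \<in> {1..<n} \<Longrightarrow> 2 \<le> card (moves (int x))"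
proof (rule ccontr)
  assume x: "x \<in> {1..<n}" and "\<not> 2 \<le> card (moves (int x))"
  then consider "card (moves (int x)) = 0" | "card (moves (int x)) = 1" by linarith
  then show False
  proof cases
    case 1
    then show False using sum_gaps_moves[OF x] finite_moves n_pos by simp
  next
    case 2
    then obtain i where i: "moves (int x) = {i}" by (auto simp: card_Suc_eq)
    then have "gap i = int n" "i < m" using sum_gaps_moves[OF x] unfolding moves_def by auto
    then show False using gap_mod_ne_0[of i] by simp
  qed
qed

lemma card_moves: "x \<in> {1..<n} \<Longrightarrow> card (moves (int x)) = 2"
proof (rule ccontr)
  assume x: "x \<in> {1..<n}" "card (moves (int x)) \<noteq> 2"
  then have "2 < card (moves (int x))" using two_le_card_moves by (simp add: order_le_neq_trans)
  then have "(\<Sum>x\<in>{1..<n}. (2::nat)) < (\<Sum>x\<in>{1..<n}. card (moves (int x)))"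
    using x(1) two_le_card_moves by (intro sum_strict_mono_ex1) auto
  then show False using sum_card_moves n_ge_2 by simp
qed

definition first_move where "first_move x = Min (moves (int x))"
definition last_move where "last_move x = Max (moves (int x))"

lemma moves_eq:
  assumes "x \<in> {1..<n}"
  shows "moves (int x) = {first_move x, last_move x}" "first_move x < last_move x"
proof -
  obtain a' b' where ab': "moves (int x) = {a', b'}" "a' \<noteq> b'"
    using card_moves[OF assms] unfolding card_2_iff by blast
  obtain a b where "moves (int x) = {a, b}" "a < b"
  proof (cases "a' < b'")
    case True
    then show ?thesis using ab' that by blast
  next
    case False
    then show ?thesis using ab' that[of b' a'] by (simp add: insert_commute)
  qed
  then show "moves (int x) = {first_move x, last_move x}" "first_move x < last_move x"
    unfolding first_move_def last_move_def by (simp_all add: max_def min_def)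
qed

lemma last_move_less: "x \<in> {1..<n} \<Longrightarrow> last_move x < m"
  using moves_eq[of x] unfolding moves_def by auto

lemma gap_moves_sum: "x \<in> {1..<n} \<Longrightarrow> gap (first_move x) + gap (last_move x) = int n"
  using sum_gaps_moves[of x] moves_eq[of x] by simp

lemma gap_less: "i < m \<Longrightarrow> gap i < int n"
proof -
  assume i: "i < m"
  then obtain x where x: "x \<in> {1..<n}" "i \<in> moves (int x)" using step_in_moves by blast
  then have "i = first_move x \<or> i = last_move x" using moves_eq by auto
  then show ?thesis
    using gap_moves_sum[OF x(1)] gap_pos[of "first_move x"] gap_pos[of "last_move x"]
      moves_eq(2)[OF x(1)] last_move_less[OF x(1)] by auto
qed

lemma suffix_prod_after_last_move:
  assumes "x \<in> {1..<n}" "k \<le> m" "Suc (last_move x) \<le> k"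
  shows "suffix_prod k (int x) = int x"
proof -
  have none: "{i\<in>moves (int x). k \<le> i} = {}" using moves_eq[OF assms(1)] assms(3) by auto
  show ?thesis using suffix_prod_eq_sum_gaps[of "int x" k] assms unfolding none by simp
qed

lemma suffix_prod_between_moves:
  assumes "x \<in> {1..<n}" "Suc (first_move x) \<le> k" "k \<le> last_move x"
  shows "suffix_prod k (int x) = int x + gap (last_move x)"
proof -
  have last: "{i\<in>moves (int x). k \<le> i} = {last_move x}"
    using moves_eq[OF assms(1)] assms(2,3) by auto
  show ?thesis
    using suffix_prod_eq_sum_gaps[of "int x" k] assms last_move_less[OF assms(1)]
    unfolding last by simp
qed

lemma suffix_prod_before_first_move:
  assumes "x \<in> {1..<n}" "k \<le> first_move x"
  shows "suffix_prod k (int x) = int x + int n"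
proof -
  have all: "{i\<in>moves (int x). k \<le> i} = moves (int x)" using moves_eq[OF assms(1)] assms(2) by auto
  have "k \<le> m" using assms(2) moves_eq(2)[OF assms(1)] last_move_less[OF assms(1)] by simp
  then show ?thesis
    using suffix_prod_eq_sum_gaps[of "int x" k] assms sum_gaps_moves[OF assms(1)]
    unfolding all by simp
qed

lemma chain_at_last_move:
  assumes x: "x \<in> {1..<n}"
  shows "c (last_move x) mod int n = int x mod int n"
proof -
  have "last_move x \<in> moves (int x)" using moves_eq[OF x] by auto
  then have "suffix_prod (Suc (last_move x)) (int x) mod int n = c (last_move x) mod int n"
    unfolding moves_def by simp
  moreover have "suffix_prod (Suc (last_move x)) (int x) = int x"
    using suffix_prod_after_last_move[OF x] last_move_less[OF x] by simp
  ultimately show ?thesis by simp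
qed

lemma chain_after_last_move:
  "x \<in> {1..<n} \<Longrightarrow> (int x + gap (last_move x)) mod int n = c (Suc (last_move x)) mod int n"
proof -
  assume "x \<in> {1..<n}"
  then have "(int x + gap (last_move x)) mod int n
      = (c (last_move x) + gap (last_move x)) mod int n"
    using chain_at_last_move by (metis mod_add_left_eq)
  then show ?thesis unfolding gap_def by simp
qed

lemma chain_at_first_move:
  assumes x: "x \<in> {1..<n}"
  shows "c (first_move x) mod int n = c (Suc (last_move x)) mod int n"
proof -
  have "first_move x \<in> moves (int x)" using moves_eq[OF x] by auto
  then have "suffix_prod (Suc (first_move x)) (int x) mod int n = c (first_move x) mod int n"
    unfolding moves_def by simp
  moreover have "suffix_prod (Suc (first_move x)) (int x) = int x + gap (last_move x)"
    using suffix_prod_between_moves[OF x] moves_eq(2)[OF x] by simp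
  ultimately show ?thesis using chain_after_last_move[OF x] by simp
qed

lemma chain_after_first_move:
  assumes x: "x \<in> {1..<n}"
  shows "c (Suc (first_move x)) mod int n = int x mod int n"
proof -
  have first: "first_move x \<in> moves (int x)" using moves_eq[OF x] by auto
  then have "suffix_prod (Suc (first_move x)) (int x) mod int n = c (first_move x) mod int n"
    unfolding moves_def by simp
  moreover have "first_move x < m" using moves_eq(2)[OF x] last_move_less[OF x] by simp
  then have "suffix_prod (first_move x) (int x)
      = suffix_prod (Suc (first_move x)) (int x) + gap (first_move x)"
    using suffix_prod_Suc[of "int x" "first_move x"] first x by simp
  then have "int x + int n = suffix_prod (Suc (first_move x)) (int x) + gap (first_move x)"
    using suffix_prod_before_first_move[OF x] by simp
  ultimately have "(int x + int n) mod int n = (c (first_move x) + gap (first_move x)) mod int n"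
    by (metis mod_add_left_eq)
  then show ?thesis unfolding gap_def by simp
qed

abbreviation "chain_vertex k \<equiv> class_vertex n (c k)"

lemma gap_eq_step_mod:
  assumes i: "i < m"
  shows "gap i = (int (chain_vertex (Suc i)) - int (chain_vertex i)) mod int n"
proof -
  have "gap i = gap i mod int n" using gap_pos[OF i] gap_less[OF i] by simp
  also have "\<dots> = (c (Suc i) - c i) mod int n" unfolding gap_def by simp
  also have "\<dots> = (int (chain_vertex (Suc i)) - int (chain_vertex i)) mod int n"
    using class_vertex_mod[OF n_pos] by (metis mod_diff_cong)
  finally show ?thesis .
qed

lemma chain_vertex_outside:
  assumes x: "x \<in> {1..<n}" and k: "k \<le> m" "k \<le> first_move x \<or> Suc (last_move x) \<le> k"
  shows "chain_vertex k \<noteq> x"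
proof -
  have "suffix_prod k (int x) mod int n = int x mod int n"
    using k suffix_prod_after_last_move[OF x k(1)] suffix_prod_before_first_move[OF x] by auto
  then have "int x mod int n \<noteq> c k mod int n" using suffix_prod_mod_ne[of "int x" k] x k(1) by simp
  then show ?thesis using class_vertex_eq_iff[OF n_pos, of x] x by auto
qed

lemma chain_vertex_parent_inside:
  assumes x: "x \<in> {1..<n}" and k: "Suc (first_move x) \<le> k" "k \<le> last_move x"
  shows "chain_vertex k \<noteq> chain_vertex (Suc (last_move x))"
proof -
  have "k \<le> m" using k last_move_less[OF x] by simp
  moreover have "suffix_prod k (int x) mod int n = c (Suc (last_move x)) mod int n"
    using suffix_prod_between_moves[OF x k] chain_after_last_move[OF x] by simp
  ultimately have "c (Suc (last_move x)) mod int n \<noteq> c k mod int n"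
    using suffix_prod_mod_ne[of "int x" k] x by simp
  then show ?thesis using class_vertex_eq_class_vertex_iff[OF n_pos] by metis
qed

lemma contour_walk_chain_vertex:
  "contour_walk n chain_vertex last_move first_move (\<lambda>x. chain_vertex (Suc (last_move x)))"
proof
  show "2 \<le> n" by (rule n_ge_2)
  show "\<And>k. k \<le> m \<Longrightarrow> chain_vertex k \<in> {1..n}" using class_vertex_in_range[OF n_pos] by blast
  show "chain_vertex 0 = n" using class_vertex_eq_iff[OF n_pos, of n] first_class_zero n_pos by simp
  show "chain_vertex m = n" using class_vertex_eq_iff[OF n_pos, of n] last_class_zero n_pos by simp
  show "\<And>i. i < m \<Longrightarrow> chain_vertex i \<noteq> chain_vertex (Suc i)"
    using class_vertex_eq_class_vertex_iff[OF n_pos] chain_mod_ne by blast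
  show "\<And>x. x \<in> {1..<n} \<Longrightarrow> first_move x < last_move x \<and> last_move x < m"
    using moves_eq(2) last_move_less by blast
  show "\<And>x. x \<in> {1..<n} \<Longrightarrow>
      chain_vertex (last_move x) = x \<and>
      chain_vertex (Suc (last_move x)) = chain_vertex (Suc (last_move x))"
    using class_vertex_eq_iff[OF n_pos] chain_at_last_move by auto
  show "\<And>x. x \<in> {1..<n} \<Longrightarrow>
      chain_vertex (first_move x) = chain_vertex (Suc (last_move x)) \<and>
      chain_vertex (Suc (first_move x)) = x"
    using class_vertex_eq_iff[OF n_pos] class_vertex_eq_class_vertex_iff[OF n_pos]
      chain_at_first_move chain_after_first_move by auto
  show "\<And>x k. x \<in> {1..<n} \<Longrightarrow> k \<le> m \<Longrightarrow> k \<le> first_move x \<or> Suc (last_move x) \<le> k \<Longrightarrow>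
      chain_vertex k \<noteq> x"
    by (rule chain_vertex_outside)
  show "\<And>x k. x \<in> {1..<n} \<Longrightarrow> Suc (first_move x) \<le> k \<Longrightarrow> k \<le> last_move x \<Longrightarrow>
      chain_vertex k \<noteq> chain_vertex (Suc (last_move x))"
    by (rule chain_vertex_parent_inside)
qed

end

section \<open>Contour walks and their lifts\<close>

context contour_walk
begin

abbreviation "m \<equiv> 2*n-2"

lemma n_pos: "n > 0"
  using n_ge_2 by simp

lemma not_mutual_parents:
  assumes x: "x \<in> {1..<n}" and y: "y \<in> {1..<n}" and xy: "x = parent y" "y = parent x"
  shows False
proof -
  have "\<not> leave x \<le> leave y"
    using vertex_outside[OF x, of "Suc (leave y)"] enter_less_leave[OF y] walk_at_leave[OF y] xy(1)
    by linarith
  moreover have "\<not> leave y \<le> leave x"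
    using vertex_outside[OF y, of "Suc (leave x)"] enter_less_leave[OF x] walk_at_leave[OF x] xy(2)
    by linarith
  ultimately show False by simp
qed

lemma inj_on_leave: "inj_on leave {1..<n}"
  by (rule inj_onI) (metis walk_at_leave)

lemma inj_on_enter: "inj_on enter {1..<n}"
  by (rule inj_onI) (metis walk_at_enter)

lemma leave_ne_enter:
  assumes x: "x \<in> {1..<n}" and y: "y \<in> {1..<n}"
  shows "leave x \<noteq> enter y"
proof
  assume eq: "leave x = enter y"
  then have "x = parent y" using walk_at_leave[OF x] walk_at_enter[OF y] by metis
  moreover have "y = parent x" using walk_at_leave[OF x] walk_at_enter[OF y] eq by metis
  ultimately show False using not_mutual_parents[OF x y] by blast
qed

lemma steps_eq_leave_enter: "{..<m} = leave ` {1..<n} \<union> enter ` {1..<n}"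
proof -
  have sub: "leave ` {1..<n} \<union> enter ` {1..<n} \<subseteq> {..<m}" using enter_less_leave by fastforce
  have "leave ` {1..<n} \<inter> enter ` {1..<n} = {}" using leave_ne_enter by blast
  then have "card (leave ` {1..<n} \<union> enter ` {1..<n})
      = card (leave ` {1..<n}) + card (enter ` {1..<n})"
    by (simp add: card_Un_disjoint)
  also have "\<dots> = card {..<m}" using inj_on_leave inj_on_enter n_ge_2 by (simp add: card_image)
  finally show ?thesis using sub by (intro card_subset_eq[symmetric]) auto
qed

lemma step_cases:
  assumes "i < m"
  obtains x where "x \<in> {1..<n}" "i = leave x" | x where "x \<in> {1..<n}" "i = enter x"
  using assms steps_eq_leave_enter by blast

definition step_dart where "step_dart i = (v i, v (Suc i))"

lemma step_dart_leave: "x \<in> {1..<n} \<Longrightarrow> step_dart (leave x) = (x, parent x)"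
  using walk_at_leave unfolding step_dart_def by simp

lemma step_dart_enter: "x \<in> {1..<n} \<Longrightarrow> step_dart (enter x) = (parent x, x)"
  using walk_at_enter unfolding step_dart_def by simp

lemma step_dart_inj:
  assumes i: "i < m" and j: "j < m" and eq: "step_dart i = step_dart j"
  shows "i = j"
proof -
  obtain x where x: "x \<in> {1..<n}" "i = leave x \<or> i = enter x" using step_cases[OF i] by metis
  obtain y where y: "y \<in> {1..<n}" "j = leave y \<or> j = enter y" using step_cases[OF j] by metis
  from x(2) y(2) show ?thesis
  proof (elim disjE)
    assume "i = leave x" "j = leave y"
    then show ?thesis using eq step_dart_leave[OF x(1)] step_dart_leave[OF y(1)] by simp
  next
    assume "i = enter x" "j = enter y"
    then show ?thesis using eq step_dart_enter[OF x(1)] step_dart_enter[OF y(1)] by simp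
  next
    assume "i = leave x" "j = enter y"
    then have "(x, parent x) = (parent y, y)"
      using eq step_dart_leave[OF x(1)] step_dart_enter[OF y(1)] by metis
    then show ?thesis using not_mutual_parents[OF x(1) y(1)] by (metis prod.inject)
  next
    assume "i = enter x" "j = leave y"
    then have "(parent x, x) = (y, parent y)"
      using eq step_dart_enter[OF x(1)] step_dart_leave[OF y(1)] by metis
    then show ?thesis using not_mutual_parents[OF x(1) y(1)] by (metis prod.inject)
  qed
qed

text \<open>The lift of the walk: the increasing chain starting at \<open>n\<close> whose classes modulo \<open>n\<close> are
  the vertices of the walk, each step rising by less than \<open>n\<close>.\<close>

definition lift_gap where "lift_gap i = (int (v (Suc i)) - int (v i)) mod int n"
definition lift where "lift i = int n + (\<Sum>l<i. lift_gap l)"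

lemma lift_Suc: "lift (Suc i) = lift i + lift_gap i"
  unfolding lift_def by simp

lemma lift_gap_bounds:
  assumes i: "i < m"
  shows "0 < lift_gap i" "lift_gap i < int n"
proof -
  have "lift_gap i \<noteq> 0"
  proof
    assume "lift_gap i = 0"
    then have "int (v (Suc i)) mod int n = int (v i) mod int n"
      unfolding lift_gap_def by (simp add: mod_eq_dvd_iff dvd_eq_mod_eq_0)
    then show False
      using mod_eq_iff_eq_in_range[OF walk_in_range walk_in_range] walk_step_ne[OF i] i by simp
  qed
  moreover have "0 \<le> lift_gap i" "lift_gap i < int n" unfolding lift_gap_def using n_pos by auto
  ultimately show "0 < lift_gap i" "lift_gap i < int n" by simp_all
qed

lemma lift_mod: "lift i mod int n = int (v i) mod int n"
proof (induction i)
  case 0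
  then show ?case unfolding lift_def using walk_start by simp
next
  case (Suc i)
  have "lift_gap i mod int n = (int (v (Suc i)) - int (v i)) mod int n"
    unfolding lift_gap_def by simp
  then have "(lift i + lift_gap i) mod int n
      = (int (v i) + (int (v (Suc i)) - int (v i))) mod int n"
    using Suc.IH by (metis mod_add_cong)
  then show ?case by (simp add: lift_Suc)
qed

lemma increasing_chain_lift: "increasing_chain n lift"
proof
  show "2 \<le> n" by (rule n_ge_2)
  show "\<And>i. i < m \<Longrightarrow> lift i < lift (Suc i)" using lift_gap_bounds lift_Suc by simp
  show "\<And>i. i < m \<Longrightarrow> lift i mod int n \<noteq> lift (Suc i) mod int n"
    using lift_mod mod_eq_iff_eq_in_range[OF walk_in_range walk_in_range] walk_step_ne
    by (metis Suc_leI less_imp_le)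
qed

lemma aff_refl_lift_eq_step_refl:
  "i < m \<Longrightarrow> aff_refl n (lift i) (lift (Suc i)) = step_refl n (v i) (v (Suc i))"
  by (rule aff_refl_eq_step_refl)
    (use n_pos walk_in_range walk_step_ne lift_mod lift_Suc lift_gap_def in auto)

lemma lift_gap_leave_enter: "x \<in> {1..<n} \<Longrightarrow> lift_gap (leave x) + lift_gap (enter x) = int n"
proof -
  assume x: "x \<in> {1..<n}"
  have "(lift_gap (leave x) + lift_gap (enter x)) mod int n
      = ((int (parent x) - int x) + (int x - int (parent x))) mod int n"
    unfolding lift_gap_def using walk_at_leave[OF x] walk_at_enter[OF x] by (simp add: mod_add_eq)
  then have "(lift_gap (leave x) + lift_gap (enter x)) mod int n = 0" by simp
  then show ?thesis
    using lift_gap_bounds enter_less_leave[OF x] pos_add_eq_if_mod_eq_0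
      by (meson order.strict_trans)
qed

lemma lift_end: "lift m = lift 0 + int n * (int n - 1)"
proof -
  have "(\<Sum>i<m. lift_gap i) = (\<Sum>i\<in>leave ` {1..<n}. lift_gap i) + (\<Sum>i\<in>enter ` {1..<n}. lift_gap i)"
    unfolding steps_eq_leave_enter using leave_ne_enter by (intro sum.union_disjoint) auto
  also have "\<dots> = (\<Sum>x\<in>{1..<n}. lift_gap (leave x)) + (\<Sum>x\<in>{1..<n}. lift_gap (enter x))"
    using inj_on_leave inj_on_enter by (simp add: sum.reindex)
  also have "\<dots> = (\<Sum>x\<in>{1..<n}. lift_gap (leave x) + lift_gap (enter x))"
    by (simp add: sum.distrib)
  also have "\<dots> = (\<Sum>x\<in>{1..<n}. int n)" using lift_gap_leave_enter by simp
  also have "\<dots> = int n * (int n - 1)" using n_pos by (simp add: of_nat_diff)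
  finally show ?thesis unfolding lift_def by simp
qed

lemma lift_mod_ne:
  assumes "k \<le> m" "w \<in> {1..n}" "v k \<noteq> w" "y mod int n = int w mod int n"
  shows "y mod int n \<noteq> lift k mod int n"
  using assms lift_mod[of k] mod_eq_iff_eq_in_range[OF assms(2) walk_in_range[OF assms(1)]] by simp

lemma lift_refl_fixes:
  assumes "k < m" "w \<in> {1..n}" "v k \<noteq> w" "v (Suc k) \<noteq> w" "y mod int n = int w mod int n"
  shows "aff_refl n (lift k) (lift (Suc k)) y = y"
  using assms by (intro aff_refl_apply_other lift_mod_ne) auto

lemma lift_refl_moves:
  assumes "k < m" "y mod int n = int (v k) mod int n"
  shows "aff_refl n (lift k) (lift (Suc k)) y = y + lift_gap k"
proof -
  interpret L: increasing_chain n lift by (rule increasing_chain_lift)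
  have "y mod int n = lift k mod int n" using assms(2) lift_mod[of k] by simp
  then show ?thesis using aff_refl_apply_first[OF L.chain_mod_ne[OF assms(1)]] lift_Suc by simp
qed

text \<open>The image of \<open>x \<equiv> t\<close> under the reflections of the lift from step \<open>k\<close> on: \<open>x\<close> is lifted
  when the walk returns from \<open>t\<close> to its parent, and again when it first enters \<open>t\<close>.\<close>

definition lift_track where
  "lift_track t x k =
     (if Suc (leave t) \<le> k then x
      else if Suc (enter t) \<le> k then x + lift_gap (leave t) else x + int n)"

lemma lift_refl_lift_track:
  assumes t: "t \<in> {1..<n}" and x: "x mod int n = int t mod int n" and k: "k < m"
  shows "aff_refl n (lift k) (lift (Suc k)) (lift_track t x (Suc k)) = lift_track t x k"
proof -
  have order: "enter t < leave t" "leave t < m" using enter_less_leave[OF t] by auto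
  have parent: "parent t \<in> {1..n}"
    using walk_in_range[of "Suc (leave t)"] walk_at_leave[OF t] order by simp
  have at_parent: "(x + lift_gap (leave t)) mod int n = int (parent t) mod int n"
  proof -
    have "(x + lift_gap (leave t)) mod int n = (lift (leave t) + lift_gap (leave t)) mod int n"
      using x lift_mod[of "leave t"] walk_at_leave[OF t] by (metis mod_add_left_eq)
    then show ?thesis using lift_mod[of "Suc (leave t)"] walk_at_leave[OF t] by (simp add: lift_Suc)
  qed
  have at_t: "(x + int n) mod int n = int t mod int n" using x by simp
  consider (after) "Suc (leave t) \<le> k" | (leave) "k = leave t"
    | (inside) "Suc (enter t) \<le> k" "k < leave t"
    | (enter) "k = enter t" | (before) "k < enter t" by linarith
  then show ?thesis
  proof cases
    case after
    then show ?thesis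
      using lift_refl_fixes[OF k _ vertex_outside[OF t] vertex_outside[OF t] x] t k
      unfolding lift_track_def by simp
  next
    case leave
    then show ?thesis
      using lift_refl_moves[OF k] x walk_at_leave[OF t] order unfolding lift_track_def by simp
  next
    case inside
    then show ?thesis
      using lift_refl_fixes[OF k parent parent_inside[OF t] parent_inside[OF t] at_parent]
      unfolding lift_track_def by simp
  next
    case enter
    then show ?thesis
      using lift_refl_moves[OF k] at_parent walk_at_enter[OF t] order lift_gap_leave_enter[OF t]
      unfolding lift_track_def by simp
  next
    case before
    then show ?thesis
      using lift_refl_fixes[OF k _ vertex_outside[OF t] vertex_outside[OF t] at_t] t k order
      unfolding lift_track_def by simp
  qed
qed

lemma suffix_prod_lift:
  assumes t: "t \<in> {1..<n}" and x: "x mod int n = int t mod int n"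
  shows "k \<le> m \<Longrightarrow> increasing_chain.suffix_prod n lift k x = lift_track t x k"
proof (induction "m - k" arbitrary: k)
  interpret L: increasing_chain n lift by (rule increasing_chain_lift)
  case 0
  then have "k = m" by simp
  then show ?case using L.suffix_prod_m enter_less_leave[OF t] unfolding lift_track_def by simp
next
  interpret L: increasing_chain n lift by (rule increasing_chain_lift)
  case (Suc j)
  then have k: "k < m" by simp
  then show ?case
    using L.suffix_prod_step[OF k] Suc lift_refl_lift_track[OF t x k]
    unfolding L.chain_refl_def by simp
qed

lemma lambda_chain_lift: "lambda_chain n lift"
proof -
  interpret L: increasing_chain n lift by (rule increasing_chain_lift)
  have "L.suffix_prod 0 x = lambda_n n x" for x
  proof (cases "x mod int n = 0")
    case True
    have "lift m mod int n = 0" using lift_mod[of m] walk_end by simp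
    then show ?thesis
      using L.suffix_prod_last_class[of x 0] True lift_end unfolding lambda_n_def by simp
  next
    case False
    define t where "t = nat (x mod int n)"
    have "int t = x mod int n" unfolding t_def using n_pos by simp
    moreover have "x mod int n < int n" using n_pos by simp
    ultimately have t: "t \<in> {1..<n}" "x mod int n = int t mod int n" using False by auto
    show ?thesis
      using suffix_prod_lift[OF t, of 0] False enter_less_leave[OF t(1)]
      unfolding lift_track_def lambda_n_def by simp
  qed
  then have "L.suffix_prod 0 = lambda_n n" by auto
  then show ?thesis
    using increasing_chain_lift unfolding lambda_chain_def lambda_chain_axioms_def
      L.suffix_prod_def L.chain_refl_def[abs_def] by simp
qed

end

section \<open>The plane tree traced by a contour walk\<close>

definition cyclic_next :: "nat set \<Rightarrow> nat \<Rightarrow> nat" where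
  "cyclic_next S s = (if \<exists>t\<in>S. s < t then LEAST t. t \<in> S \<and> s < t else LEAST t. t \<in> S)"

lemma cyclic_next_in: "s \<in> S \<Longrightarrow> cyclic_next S s \<in> S"
  unfolding cyclic_next_def by (auto intro: LeastI2_ex)

lemma cyclic_next_eq_least_greater:
  "u \<in> S \<Longrightarrow> s < u \<Longrightarrow> (\<forall>t\<in>S. s < t \<longrightarrow> u \<le> t) \<Longrightarrow> cyclic_next S s = u"
  unfolding cyclic_next_def by (auto intro!: Least_equality)

lemma cyclic_next_eq_least:
  "u \<in> S \<Longrightarrow> (\<forall>t\<in>S. \<not> s < t) \<Longrightarrow> (\<forall>t\<in>S. u \<le> t) \<Longrightarrow> cyclic_next S s = u"
  unfolding cyclic_next_def by (auto intro!: Least_equality)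

lemma cyclic_next_reaches_greater:
  "finite S \<Longrightarrow> s \<in> S \<Longrightarrow> t \<in> S \<Longrightarrow> s \<le> t \<Longrightarrow> \<exists>k. (cyclic_next S ^^ k) s = t"
proof (induction "t - s" arbitrary: s rule: less_induct)
  case less
  show ?case
  proof (cases "s = t")
    case True
    then show ?thesis by (intro exI[of _ 0]) simp
  next
    case False
    then have "s < t" using less by simp
    then have next_le: "s < cyclic_next S s" "cyclic_next S s \<le> t"
      using less(3,4) unfolding cyclic_next_def by (auto intro: LeastI2_ex Least_le)
    then have "\<exists>k. (cyclic_next S ^^ k) (cyclic_next S s) = t"
      using less(1)[of "cyclic_next S s"] less(2,4) cyclic_next_in[OF less(3)] by simp
    then obtain k where "(cyclic_next S ^^ k) (cyclic_next S s) = t" by blast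
    then have "(cyclic_next S ^^ Suc k) s = t" by (simp add: funpow_Suc_right del: funpow.simps)
    then show ?thesis by blast
  qed
qed

lemma cyclic_next_reaches:
  assumes S: "finite S" "s \<in> S" "t \<in> S"
  shows "\<exists>k. (cyclic_next S ^^ k) s = t"
proof (cases "s \<le> t")
  case True
  then show ?thesis using cyclic_next_reaches_greater S by blast
next
  case False
  have max: "Max S \<in> S" "s \<le> Max S" using S by (auto intro: Max_in)
  obtain k1 where k1: "(cyclic_next S ^^ k1) s = Max S"
    using cyclic_next_reaches_greater[OF S(1,2) max] by blast
  have "\<not> (\<exists>u\<in>S. Max S < u)" using S(1) by (meson Max_ge not_le)
  then have "cyclic_next S (Max S) \<le> t" using S(3) unfolding cyclic_next_def by (simp add: Least_le)
  then obtain k2 where k2: "(cyclic_next S ^^ k2) (cyclic_next S (Max S)) = t"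
    using cyclic_next_reaches_greater[OF S(1) cyclic_next_in[OF max(1)] S(3)] by blast
  have "(cyclic_next S ^^ (k2 + Suc k1)) s = (cyclic_next S ^^ k2) ((cyclic_next S ^^ Suc k1) s)"
    by (simp only: funpow_add comp_apply)
  then have "(cyclic_next S ^^ (k2 + Suc k1)) s = t" using k1 k2 by simp
  then show ?thesis by blast
qed

context contour_walk
begin

definition walk_edges where "walk_edges = (\<lambda>i. {v i, v (Suc i)}) ` {..<m}"
definition walk_darts where "walk_darts = step_dart ` {..<m}"
definition step_of where "step_of d = (THE s. s < m \<and> step_dart s = d)"

text \<open>At the vertex where the walk arrives along the reverse of \<open>d\<close>, the dart following \<open>d\<close> is
  the one along which the walk leaves next.\<close>

definition walk_rotation where
  "walk_rotation d =
     (if prod.swap d \<in> walk_darts then step_dart (Suc (step_of (prod.swap d)) mod m) else d)"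

lemma m_pos: "0 < m"
  using n_ge_2 by simp

lemma step_of_step_dart: "s < m \<Longrightarrow> step_of (step_dart s) = s"
  unfolding step_of_def using step_dart_inj by (intro the_equality) auto

lemma walk_Suc_mod: "s < m \<Longrightarrow> v (Suc s mod m) = v (Suc s)"
  using walk_start walk_end by (cases "Suc s = m") auto

lemma swap_step_dart_in_walk_darts:
  assumes i: "i < m"
  shows "prod.swap (step_dart i) \<in> walk_darts"
proof (cases rule: step_cases[OF i])
  case (1 x)
  then have "prod.swap (step_dart i) = step_dart (enter x)"
    using step_dart_leave step_dart_enter by simp
  then show ?thesis unfolding walk_darts_def using enter_less_leave[OF 1(1)] by auto
next
  case (2 x)
  then have "prod.swap (step_dart i) = step_dart (leave x)"
    using step_dart_leave step_dart_enter by simp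
  then show ?thesis unfolding walk_darts_def using enter_less_leave[OF 2(1)] by auto
qed

lemma swap_in_walk_darts: "d \<in> walk_darts \<Longrightarrow> prod.swap d \<in> walk_darts"
  using swap_step_dart_in_walk_darts unfolding walk_darts_def by blast

lemma finite_walk_darts: "finite walk_darts"
  unfolding walk_darts_def by simp

lemma darts_walk_edges: "darts walk_edges = walk_darts"
proof
  show "walk_darts \<subseteq> darts walk_edges"
    unfolding walk_darts_def walk_edges_def darts_def step_dart_def by auto
  show "darts walk_edges \<subseteq> walk_darts"
  proof
    fix d assume "d \<in> darts walk_edges"
    then obtain i where i: "i < m" "{fst d, snd d} = {v i, v (Suc i)}"
      unfolding darts_def walk_edges_def by auto
    then have "d = step_dart i \<or> d = prod.swap (step_dart i)" unfolding step_dart_def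
      by (cases d) (auto simp: doubleton_eq_iff)
    then show "d \<in> walk_darts"
      using swap_step_dart_in_walk_darts[OF i(1)] i(1) unfolding walk_darts_def by auto
  qed
qed

lemma walk_rotation_swap_step_dart:
  "s < m \<Longrightarrow> walk_rotation (prod.swap (step_dart s)) = step_dart (Suc s mod m)"
  unfolding walk_rotation_def using step_of_step_dart by (simp add: walk_darts_def)

lemma walk_dart_walk_rotation: "k < m \<Longrightarrow> walk_dart n walk_rotation (v 1) k = step_dart k"
proof (induction k)
  case 0
  then show ?case using walk_start by (simp add: step_dart_def)
next
  case (Suc k)
  then have "walk_dart n walk_rotation (v 1) k = (v k, v (Suc k))" by (simp add: step_dart_def)
  moreover have "walk_rotation (v (Suc k), v k) = step_dart (Suc k)"
    using walk_rotation_swap_step_dart[of k] Suc.prems by (simp add: step_dart_def)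
  ultimately show ?case by (simp add: step_dart_def)
qed

lemma walk_edges_eq: "walk_edges = (\<lambda>x. {x, parent x}) ` {1..<n}"
proof
  show "walk_edges \<subseteq> (\<lambda>x. {x, parent x}) ` {1..<n}"
  proof
    fix e assume "e \<in> walk_edges"
    then obtain i where i: "i < m" "e = {v i, v (Suc i)}" unfolding walk_edges_def by auto
    show "e \<in> (\<lambda>x. {x, parent x}) ` {1..<n}"
    proof (cases rule: step_cases[OF i(1)])
      case (1 x)
      then show ?thesis using i(2) walk_at_leave[OF 1(1)] by auto
    next
      case (2 x)
      then show ?thesis using i(2) walk_at_enter[OF 2(1)] by auto
    qed
  qed
  show "(\<lambda>x. {x, parent x}) ` {1..<n} \<subseteq> walk_edges"
  proof
    fix e assume "e \<in> (\<lambda>x. {x, parent x}) ` {1..<n}"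
    then obtain x where x: "x \<in> {1..<n}" "e = {x, parent x}" by blast
    then have "e = {v (leave x), v (Suc (leave x))}" using walk_at_leave[OF x(1)] by simp
    then show "e \<in> walk_edges" unfolding walk_edges_def using enter_less_leave[OF x(1)] by auto
  qed
qed

lemma card_walk_edges: "card walk_edges = n - 1"
proof -
  have "inj_on (\<lambda>x. {x, parent x}) {1..<n}"
  proof (rule inj_onI)
    fix x y assume x: "x \<in> {1..<n}" and y: "y \<in> {1..<n}" and eq: "{x, parent x} = {y, parent y}"
    show "x = y"
    proof (rule ccontr)
      assume "x \<noteq> y"
      then have "x = parent y \<and> parent x = y" using eq by (auto simp: doubleton_eq_iff)
      then show False using not_mutual_parents[OF x y] by metis
    qed
  qed
  then show ?thesis unfolding walk_edges_eq by (simp add: card_image)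
qed

lemma walk_edges_connected: "k \<le> m \<Longrightarrow> (n, v k) \<in> (darts walk_edges)\<^sup>*"
proof (induction k)
  case 0
  then show ?case using walk_start by simp
next
  case (Suc k)
  then have "{v k, v (Suc k)} \<in> walk_edges" unfolding walk_edges_def by auto
  then show ?case using Suc by (auto simp: darts_def intro: rtrancl_into_rtrancl)
qed

lemma is_tree_on_walk_edges: "is_tree_on n walk_edges"
  unfolding is_tree_on_def darts_def[symmetric]
proof (intro conjI ballI)
  show "walk_edges \<subseteq> {{a, b} |a b. a \<in> {1..n} \<and> b \<in> {1..n} \<and> a \<noteq> b}"
  proof
    fix e assume "e \<in> walk_edges"
    then obtain i where i: "i < m" "e = {v i, v (Suc i)}" unfolding walk_edges_def by blast
    have "v i \<in> {1..n}" "v (Suc i) \<in> {1..n}" "v i \<noteq> v (Suc i)"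
      using walk_in_range[of i] walk_in_range[of "Suc i"] walk_step_ne[OF i(1)] i(1) by auto
    then show "e \<in> {{a, b} |a b. a \<in> {1..n} \<and> b \<in> {1..n} \<and> a \<noteq> b}" using i(2) by blast
  qed
  show "card walk_edges = n - 1" by (rule card_walk_edges)
  fix w assume w: "w \<in> {1..n}"
  show "(n, w) \<in> (darts walk_edges)\<^sup>*"
  proof (cases "w = n")
    case True
    then show ?thesis by simp
  next
    case False
    then have "w \<in> {1..<n}" using w by simp
    then show ?thesis
      using walk_edges_connected[of "leave w"] walk_at_leave[of w] enter_less_leave[of w] by simp
  qed
qed

lemma walk_rotation_in_walk_darts:
  assumes "d \<in> walk_darts"
  obtains s where "s < m" "prod.swap d = step_dart s" "walk_rotation d = step_dart (Suc s mod m)"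
    "walk_rotation d \<in> walk_darts"
proof -
  obtain s where s: "s < m" "prod.swap d = step_dart s"
    using swap_in_walk_darts[OF assms] unfolding walk_darts_def by auto
  then have "walk_rotation d = step_dart (Suc s mod m)"
    using walk_rotation_swap_step_dart[of s] by (metis swap_swap)
  then show ?thesis using that s m_pos unfolding walk_darts_def by auto
qed

lemma inj_on_walk_rotation: "inj_on walk_rotation walk_darts"
proof (rule inj_onI)
  fix d1 d2 assume d: "d1 \<in> walk_darts" "d2 \<in> walk_darts" "walk_rotation d1 = walk_rotation d2"
  obtain s1 where s1: "s1 < m" "prod.swap d1 = step_dart s1"
      "walk_rotation d1 = step_dart (Suc s1 mod m)"
    using walk_rotation_in_walk_darts[OF d(1)] by blast
  obtain s2 where s2: "s2 < m" "prod.swap d2 = step_dart s2"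
      "walk_rotation d2 = step_dart (Suc s2 mod m)"
    using walk_rotation_in_walk_darts[OF d(2)] by blast
  have "Suc s1 mod m = Suc s2 mod m"
    using step_dart_inj[of "Suc s1 mod m" "Suc s2 mod m"] s1 s2 d(3) m_pos by simp
  moreover have "Suc s mod m = (if Suc s = m then 0 else Suc s)" if "s < m" for s
    using that by auto
  ultimately have "s1 = s2" using s1(1) s2(1) by (auto split: if_splits)
  then show "d1 = d2" using s1 s2 by (metis swap_swap)
qed

lemma bij_betw_walk_rotation: "bij_betw walk_rotation walk_darts walk_darts"
proof -
  have "walk_rotation ` walk_darts \<subseteq> walk_darts"
    using walk_rotation_in_walk_darts by (meson image_subsetI)
  then have "walk_rotation ` walk_darts = walk_darts"
    using endo_inj_surj[OF finite_walk_darts _ inj_on_walk_rotation] by simp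
  then show ?thesis using inj_on_walk_rotation unfolding bij_betw_def by simp
qed

lemma fst_walk_rotation: "d \<in> walk_darts \<Longrightarrow> fst (walk_rotation d) = fst d"
proof -
  assume "d \<in> walk_darts"
  then obtain s where s: "s < m" "prod.swap d = step_dart s"
      "walk_rotation d = step_dart (Suc s mod m)"
    using walk_rotation_in_walk_darts by blast
  have "fst d = v (Suc s)" using s(2) unfolding step_dart_def by (metis snd_conv snd_swap)
  then show ?thesis using s(3) walk_Suc_mod[OF s(1)] unfolding step_dart_def by simp
qed

definition arrivals where "arrivals a = {s. s < m \<and> v (Suc s) = a}"

lemma finite_arrivals: "finite (arrivals a)"
  unfolding arrivals_def by simp

lemma arrivals_bounds:
  assumes x: "x \<in> {1..<n}" and t: "t \<in> arrivals x"
  shows "enter x \<le> t" "t < leave x"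
proof -
  have "Suc t \<le> m" "v (Suc t) = x" using t unfolding arrivals_def by auto
  then have "\<not> (Suc t \<le> enter x \<or> Suc (leave x) \<le> Suc t)" using vertex_outside[OF x] by blast
  then show "enter x \<le> t" "t < leave x" by auto
qed

lemma arrival_at_parent:
  assumes x: "x \<in> {1..<n}" and t: "t \<in> arrivals (parent x)" "enter x \<le> t"
  shows "leave x \<le> t"
proof (rule ccontr)
  assume "\<not> leave x \<le> t"
  then have "v (Suc t) \<noteq> parent x" using parent_inside[OF x, of "Suc t"] t(2) by simp
  then show False using t(1) unfolding arrivals_def by simp
qed

lemma next_arrival_after_leave:
  assumes x: "x \<in> {1..<n}" and s: "Suc s = leave x"
  shows "cyclic_next (arrivals x) s = enter x"
proof (rule cyclic_next_eq_least)
  show "enter x \<in> arrivals x"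
    unfolding arrivals_def using walk_at_enter[OF x] enter_less_leave[OF x] by simp
  show "\<forall>t\<in>arrivals x. \<not> s < t" using arrivals_bounds[OF x] s by fastforce
  show "\<forall>t\<in>arrivals x. enter x \<le> t" using arrivals_bounds[OF x] by blast
qed

lemma next_arrival_after_enter:
  assumes x: "x \<in> {1..<n}" and s: "s < m" "Suc s mod m = enter x"
  shows "cyclic_next (arrivals (parent x)) s = leave x"
proof -
  have leave: "leave x \<in> arrivals (parent x)"
    unfolding arrivals_def using walk_at_leave[OF x] enter_less_leave[OF x] by simp
  show ?thesis
  proof (cases "Suc s = m")
    case True
    then have "enter x = 0" using s(2) by simp
    then show ?thesis
      using leave True arrival_at_parent[OF x] unfolding arrivals_def
      by (intro cyclic_next_eq_least) auto
  next
    case False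
    then have "Suc s = enter x" using s by simp
    then show ?thesis
      using leave arrival_at_parent[OF x] enter_less_leave[OF x]
      by (intro cyclic_next_eq_least_greater) auto
  qed
qed

lemma swap_next_step_dart:
  assumes s: "s < m"
  shows "prod.swap (step_dart (Suc s mod m)) = step_dart (cyclic_next (arrivals (v (Suc s))) s)"
proof -
  have j: "Suc s mod m < m" using m_pos by simp
  have v: "v (Suc s mod m) = v (Suc s)" using walk_Suc_mod[OF s] .
  show ?thesis
  proof (cases rule: step_cases[OF j])
    case (1 x)
    then have "Suc s = leave x" using enter_less_leave[OF 1(1)] s by (cases "Suc s = m") auto
    then show ?thesis
      using 1 v next_arrival_after_leave step_dart_leave step_dart_enter walk_at_leave by simp
  next
    case (2 x)
    then show ?thesis
      using v next_arrival_after_enter[OF 2(1) s] step_dart_leave step_dart_enter walk_at_enter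
      by simp
  qed
qed

lemma walk_rotation_funpow:
  "s \<in> arrivals a \<Longrightarrow>
    (walk_rotation ^^ k) (prod.swap (step_dart s))
      = prod.swap (step_dart ((cyclic_next (arrivals a) ^^ k) s))"
proof (induction k arbitrary: s)
  case 0
  then show ?case by simp
next
  case (Suc k)
  have s: "s < m" "v (Suc s) = a" using Suc.prems unfolding arrivals_def by auto
  have step: "walk_rotation (prod.swap (step_dart s))
      = prod.swap (step_dart (cyclic_next (arrivals a) s))"
    using walk_rotation_swap_step_dart[OF s(1)] swap_next_step_dart[OF s(1)] s(2)
      by (metis swap_swap)
  have "(walk_rotation ^^ Suc k) (prod.swap (step_dart s))
      = (walk_rotation ^^ k) (walk_rotation (prod.swap (step_dart s)))"
    by (simp only: funpow_Suc_right comp_apply)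
  also have "\<dots>
      = prod.swap (step_dart ((cyclic_next (arrivals a) ^^ k) (cyclic_next (arrivals a) s)))"
    unfolding step using Suc.IH[OF cyclic_next_in[OF Suc.prems]] .
  also have "\<dots> = prod.swap (step_dart ((cyclic_next (arrivals a) ^^ Suc k) s))"
    by (simp only: funpow_Suc_right comp_apply)
  finally show ?case .
qed

lemma walk_dart_as_arrival:
  assumes "d \<in> walk_darts"
  obtains s where "s \<in> arrivals (fst d)" "d = prod.swap (step_dart s)"
proof -
  obtain s where s: "s < m" "prod.swap d = step_dart s"
    using swap_in_walk_darts[OF assms] unfolding walk_darts_def by blast
  then have "v (Suc s) = fst d" unfolding step_dart_def by (metis snd_conv snd_swap)
  then show ?thesis
    using s that unfolding arrivals_def by (metis (mono_tags, lifting) mem_Collect_eq swap_swap)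
qed

lemma is_rotation_system_walk_rotation: "is_rotation_system walk_edges walk_rotation"
  unfolding is_rotation_system_def darts_walk_edges
proof (intro conjI ballI allI impI)
  show "bij_betw walk_rotation walk_darts walk_darts" by (rule bij_betw_walk_rotation)
  show "walk_rotation d = d" if "d \<notin> walk_darts" for d
    using that swap_in_walk_darts unfolding walk_rotation_def by (metis swap_swap)
  show "fst (walk_rotation d) = fst d" if "d \<in> walk_darts" for d
    using fst_walk_rotation that .
  fix d d' assume d: "d \<in> walk_darts" and d': "d' \<in> walk_darts" and fst: "fst d = fst d'"
  obtain s where s: "s \<in> arrivals (fst d)" "d = prod.swap (step_dart s)"
    using walk_dart_as_arrival[OF d] .
  obtain s' where s': "s' \<in> arrivals (fst d)" "d' = prod.swap (step_dart s')"
    using walk_dart_as_arrival[OF d'] fst by metis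
  obtain k where "(cyclic_next (arrivals (fst d)) ^^ k) s = s'"
    using cyclic_next_reaches[OF finite_arrivals s(1) s'(1)] by blast
  then have "(walk_rotation ^^ k) d = d'"
    using walk_rotation_funpow[OF s(1), of k] s(2) s'(2) by simp
  then show "\<exists>k. (walk_rotation ^^ k) d = d'" by blast
qed

definition walk_tree where "walk_tree = (walk_edges, walk_rotation, v 1)"

lemma walk_tree_in_E_marked: "walk_tree \<in> E_marked n"
proof -
  have "{n, v 1} \<in> walk_edges" unfolding walk_edges_def using walk_start m_pos by force
  then show ?thesis
    unfolding E_marked_def walk_tree_def
    using is_tree_on_walk_edges is_rotation_system_walk_rotation by simp
qed

definition walk_refls where "walk_refls = map (\<lambda>k. step_refl n (v k) (v (Suc k))) [0..<m]"

lemma r_T_walk_tree: "r_T n walk_tree = walk_refls"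
  unfolding r_T_def walk_refls_def walk_tree_def
  using walk_dart_walk_rotation unfolding step_dart_def step_refl_def
  by (auto intro!: map_cong)

lemma walk_refls_eq_lift: "walk_refls = map (\<lambda>i. aff_refl n (lift i) (lift (Suc i))) [0..<m]"
  unfolding walk_refls_def using aff_refl_lift_eq_step_refl by (auto intro!: map_cong)

lemma walk_refls_in_fact_lambda: "walk_refls \<in> fact_lambda n"
proof -
  interpret L: lambda_chain n lift by (rule lambda_chain_lift)
  have "set walk_refls \<subseteq> aff_reflections n"
    unfolding walk_refls_eq_lift using L.chain_mod_ne by (fastforce simp: aff_reflections_def)
  then show ?thesis unfolding fact_lambda_def walk_refls_eq_lift using L.chain_prod by simp
qed

lemma tree_like_walk_refls: "tree_like n walk_refls"
  unfolding tree_like_def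
proof (intro conjI exI)
  interpret L: increasing_chain n lift by (rule increasing_chain_lift)
  show "length walk_refls = 2 * n - 2" unfolding walk_refls_def by simp
  show "\<forall>k\<in>{1..2 * n - 2}. lift (k - 1) < lift k \<and> lift (k - 1) mod int n \<noteq> lift k mod int n \<and>
      walk_refls ! (k - 1) = aff_refl n (lift (k - 1)) (lift k)"
  proof
    fix k assume "k \<in> {1..2 * n - 2}"
    then have k: "k - 1 < m" "Suc (k - 1) = k" by auto
    then show "lift (k - 1) < lift k \<and> lift (k - 1) mod int n \<noteq> lift k mod int n \<and>
        walk_refls ! (k - 1) = aff_refl n (lift (k - 1)) (lift k)"
      using L.chain_less[OF k(1)] L.chain_mod_ne[OF k(1)] unfolding walk_refls_eq_lift by simp
  qed
  show "\<forall>k\<in>{1..2 * n - 3}. lift k mod int n = lift k mod int n" by simp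
qed

end

section \<open>Trees as edge sets\<close>

lemma exists_crossing_step:
  assumes "P i" "\<not> P j" "i \<le> j"
  shows "\<exists>k. i \<le> k \<and> k < j \<and> P k \<and> \<not> P (Suc k)"
  using assms
proof (induction j)
  case 0
  then show ?case by simp
next
  case (Suc j)
  show ?case
  proof (cases "P j")
    case True
    then show ?thesis using Suc.prems by (intro exI[of _ j]) (auto simp: le_Suc_eq)
  next
    case False
    have "i \<le> j" using Suc.prems False by (auto simp: le_Suc_eq)
    then show ?thesis using Suc.IH[OF Suc.prems(1) False] by auto
  qed
qed

lemma swap_in_darts: "d \<in> darts E \<Longrightarrow> prod.swap d \<in> darts E"
  unfolding darts_def by (auto simp: insert_commute)

lemma rtrancl_darts_sym: "(a, b) \<in> (darts E)\<^sup>* \<Longrightarrow> (b, a) \<in> (darts E)\<^sup>*"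
proof (induction rule: rtrancl_induct)
  case base
  then show ?case by simp
next
  case (step y z)
  then show ?case
    using swap_in_darts[OF step(2)] by (auto intro: converse_rtrancl_into_rtrancl)
qed

lemma rtrancl_darts_edge: "(x, a) \<in> (darts E)\<^sup>* \<Longrightarrow> {a, b} \<in> E \<Longrightarrow> (x, b) \<in> (darts E)\<^sup>*"
  unfolding darts_def by (auto intro: rtrancl_into_rtrancl)

lemma edges_eq_image_darts:
  assumes "\<And>e. e \<in> E \<Longrightarrow> \<exists>a b. e = {a, b}"
  shows "E = (\<lambda>d. {fst d, snd d}) ` darts E"
proof
  show "E \<subseteq> (\<lambda>d. {fst d, snd d}) ` darts E"
  proof
    fix e assume e: "e \<in> E"
    then obtain a b where "e = {a, b}" using assms by blast
    then show "e \<in> (\<lambda>d. {fst d, snd d}) ` darts E" using e unfolding darts_def by force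
  qed
  show "(\<lambda>d. {fst d, snd d}) ` darts E \<subseteq> E" unfolding darts_def by auto
qed

definition upward_darts :: "nat set set \<Rightarrow> (nat \<times> nat) set" where
  "upward_darts E = {d \<in> darts E. fst d < snd d}"

lemma bij_betw_upward_darts:
  assumes E: "\<And>e. e \<in> E \<Longrightarrow> \<exists>a b. a \<noteq> b \<and> e = {a, b}"
  shows "bij_betw (\<lambda>d. {fst d, snd d}) (upward_darts E) E"
proof (rule bij_betwI')
  fix x y assume "x \<in> upward_darts E" "y \<in> upward_darts E"
  then show "({fst x, snd x} = {fst y, snd y}) = (x = y)"
    unfolding upward_darts_def by (auto simp: doubleton_eq_iff prod_eq_iff)
next
  fix x assume "x \<in> upward_darts E"
  then show "{fst x, snd x} \<in> E" unfolding upward_darts_def darts_def by auto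
next
  fix e assume e: "e \<in> E"
  then obtain a b where ab: "a \<noteq> b" "e = {a, b}" using E by blast
  show "\<exists>x\<in>upward_darts E. e = {fst x, snd x}"
  proof (cases "a < b")
    case True
    then show ?thesis using e ab unfolding upward_darts_def darts_def
      by (intro bexI[of _ "(a, b)"]) auto
  next
    case False
    then have "b < a" using ab(1) by simp
    then show ?thesis using e ab unfolding upward_darts_def darts_def
      by (intro bexI[of _ "(b, a)"]) (auto simp: insert_commute)
  qed
qed

lemma darts_eq_upward_darts_Un_swap:
  assumes E: "\<And>e. e \<in> E \<Longrightarrow> \<exists>a b. a \<noteq> b \<and> e = {a, b}"
  shows "darts E = upward_darts E \<union> prod.swap ` upward_darts E"
proof
  show "darts E \<subseteq> upward_darts E \<union> prod.swap ` upward_darts E"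
  proof
    fix d assume d: "d \<in> darts E"
    then have "{fst d, snd d} \<in> E" unfolding darts_def by (cases d) simp
    then obtain a b where "a \<noteq> b" "{fst d, snd d} = {a, b}" using E by blast
    then have ne: "fst d \<noteq> snd d" by (auto simp: doubleton_eq_iff)
    show "d \<in> upward_darts E \<union> prod.swap ` upward_darts E"
    proof (cases "fst d < snd d")
      case True
      then show ?thesis using d unfolding upward_darts_def by simp
    next
      case False
      then have "prod.swap d \<in> upward_darts E"
        using ne swap_in_darts[OF d] unfolding upward_darts_def by simp
      then show ?thesis by (metis UnI2 image_eqI swap_swap)
    qed
  qed
  show "upward_darts E \<union> prod.swap ` upward_darts E \<subseteq> darts E"
    unfolding upward_darts_def using swap_in_darts by auto
qed

lemma card_darts:
  assumes fin: "finite (darts E)" and E: "\<And>e. e \<in> E \<Longrightarrow> \<exists>a b. a \<noteq> b \<and> e = {a, b}"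
  shows "card (darts E) = 2 * card E"
proof -
  have "upward_darts E \<inter> prod.swap ` upward_darts E = {}" unfolding upward_darts_def by auto
  moreover have "finite (upward_darts E)" unfolding upward_darts_def using fin by simp
  ultimately have "card (darts E) = card (upward_darts E) + card (prod.swap ` upward_darts E)"
    using darts_eq_upward_darts_Un_swap[OF E] by (simp add: card_Un_disjoint)
  then show ?thesis
    using bij_betw_same_card[OF bij_betw_upward_darts[OF E]] by (simp add: card_image)
qed

lemma finite_edges_on: "finite V \<Longrightarrow> finite {{a, b} | a b. a \<in> V \<and> b \<in> V \<and> a \<noteq> b}"
proof -
  assume "finite V"
  moreover have "{{a, b} | a b. a \<in> V \<and> b \<in> V \<and> a \<noteq> b} \<subseteq> Pow V" by auto
  ultimately show ?thesis by (meson finite_Pow_iff finite_subset)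
qed

definition dist_from :: "nat set set \<Rightarrow> nat \<Rightarrow> nat \<Rightarrow> nat" where
  "dist_from E r w = (LEAST k. (r, w) \<in> darts E ^^ k)"

lemma exists_nearer_neighbour:
  assumes "(r, w) \<in> (darts E)\<^sup>*" "w \<noteq> r"
  shows "\<exists>p. (p, w) \<in> darts E \<and> dist_from E r p < dist_from E r w"
proof -
  let ?R = "darts E"
  have dist: "(r, w) \<in> ?R ^^ dist_from E r w"
    unfolding dist_from_def using assms(1) rtrancl_power by (metis (no_types, lifting) LeastI)
  have "dist_from E r w \<noteq> 0"
  proof
    assume "dist_from E r w = 0"
    then have "(r, w) \<in> ?R ^^ 0" using dist by simp
    then show False using assms(2) by simp
  qed
  then obtain j where j: "dist_from E r w = Suc j" by (cases "dist_from E r w") auto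
  then obtain p where p: "(r, p) \<in> ?R ^^ j" "(p, w) \<in> ?R" using dist by (auto elim: relpow_Suc_E)
  have "dist_from E r p \<le> j" unfolding dist_from_def using p(1) by (rule Least_le)
  then show ?thesis using p(2) j by auto
qed

text \<open>A connected graph has at most one vertex more than edges: sending every vertex other than
  the root to an edge towards a nearer vertex is injective.\<close>

lemma connected_card_le_Suc_card:
  assumes V: "finite V" "r \<in> V"
    and E: "E \<subseteq> {{a, b} | a b. a \<in> V \<and> b \<in> V \<and> a \<noteq> b}"
    and conn: "\<forall>w\<in>V. (r, w) \<in> (darts E)\<^sup>*"
  shows "card V \<le> Suc (card E)"
proof -
  define pr where "pr w = (SOME p. (p, w) \<in> darts E \<and> dist_from E r p < dist_from E r w)" for w
  have pr: "(pr w, w) \<in> darts E" "dist_from E r (pr w) < dist_from E r w" if w: "w \<in> V - {r}" for w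
  proof -
    have "\<exists>p. (p, w) \<in> darts E \<and> dist_from E r p < dist_from E r w"
      using exists_nearer_neighbour[of r w E] conn w by blast
    then show "(pr w, w) \<in> darts E" "dist_from E r (pr w) < dist_from E r w"
      unfolding pr_def by (metis (mono_tags, lifting) someI_ex)+
  qed
  have inj: "inj_on (\<lambda>w. {pr w, w}) (V - {r})"
  proof (rule inj_onI)
    fix w w' assume w: "w \<in> V - {r}" and w': "w' \<in> V - {r}" and eq: "{pr w, w} = {pr w', w'}"
    show "w = w'"
    proof (rule ccontr)
      assume "w \<noteq> w'"
      then have parents: "w = pr w' \<and> w' = pr w" using eq by (metis doubleton_eq_iff)
      have "dist_from E r w' < dist_from E r w" using pr(2)[OF w] parents by metis
      moreover have "dist_from E r w < dist_from E r w'" using pr(2)[OF w'] parents by metis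
      ultimately show False by linarith
    qed
  qed
  have "(\<lambda>w. {pr w, w}) ` (V - {r}) \<subseteq> E" using pr(1) unfolding darts_def by auto
  moreover have "finite E" using finite_subset[OF E finite_edges_on[OF V(1)]] .
  ultimately have "card (V - {r}) \<le> card E" using card_inj_on_le[OF inj] by blast
  then show ?thesis using V by simp
qed

lemma tree_edge_is_bridge:
  assumes tree: "is_tree_on n E" and e: "{u, w} \<in> E"
  shows "(u, w) \<notin> (darts (E - {{u, w}}))\<^sup>*"
proof
  assume uw: "(u, w) \<in> (darts (E - {{u, w}}))\<^sup>*"
  let ?F = "E - {{u, w}}"
  have E: "E \<subseteq> {{a, b} | a b. a \<in> {1..n} \<and> b \<in> {1..n} \<and> a \<noteq> b}" "card E = n - 1"
    and conn: "\<forall>x\<in>{1..n}. (n, x) \<in> (darts E)\<^sup>*"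
    using tree unfolding is_tree_on_def darts_def by auto
  have fin: "finite E" using finite_subset[OF E(1) finite_edges_on] by simp
  then have "card E > 0" using e card_gt_0_iff by blast
  then have n: "n \<ge> 2" using E(2) by simp
  have "darts E \<subseteq> (darts ?F)\<^sup>*"
  proof
    fix d assume d: "d \<in> darts E"
    show "d \<in> (darts ?F)\<^sup>*"
    proof (cases "{fst d, snd d} = {u, w}")
      case True
      then have "d = (u, w) \<or> d = (w, u)" by (auto simp: doubleton_eq_iff prod_eq_iff)
      then show ?thesis using uw rtrancl_darts_sym[OF uw] by auto
    next
      case False
      then have "d \<in> darts ?F" using d unfolding darts_def by (cases d) simp
      then show ?thesis by (rule r_into_rtrancl)
    qed
  qed
  then have "(darts E)\<^sup>* \<subseteq> (darts ?F)\<^sup>*" using rtrancl_subset_rtrancl by blast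
  then have "\<forall>x\<in>{1..n}. (n, x) \<in> (darts ?F)\<^sup>*" using conn by blast
  then have "card {1..n} \<le> Suc (card ?F)"
    using E(1) n by (intro connected_card_le_Suc_card) auto
  moreover have "card ?F = n - 2" using E(2) e fin by simp
  ultimately show False using n by simp
qed

section \<open>The clockwise walk around a marked plane tree\<close>

locale marked_plane_tree =
  fixes n :: nat and E :: "nat set set" and \<rho> :: "nat \<times> nat \<Rightarrow> nat \<times> nat" and m0 :: nat
  assumes n_ge_2: "2 \<le> n" and in_E_marked: "(E, \<rho>, m0) \<in> E_marked n"
begin

abbreviation "m \<equiv> 2*n-2"

definition walk where "walk k = walk_dart n \<rho> m0 k"

lemma tree: "is_tree_on n E" and rotation: "is_rotation_system E \<rho>" and marked_edge: "{n, m0} \<in> E"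
  using in_E_marked unfolding E_marked_def by auto

lemma edges_subset: "E \<subseteq> {{a, b} |a b. a \<in> {1..n} \<and> b \<in> {1..n} \<and> a \<noteq> b}"
  using tree unfolding is_tree_on_def by blast

lemma card_E: "card E = n - 1"
  using tree unfolding is_tree_on_def by blast

lemma connected: "\<forall>w\<in>{1..n}. (n, w) \<in> (darts E)\<^sup>*"
  using tree unfolding is_tree_on_def darts_def by blast

lemma edge_in_range: "{a, b} \<in> E \<Longrightarrow> a \<in> {1..n} \<and> b \<in> {1..n} \<and> a \<noteq> b"
proof -
  assume "{a, b} \<in> E"
  then obtain c e where "{a, b} = {c, e}" "c \<in> {1..n}" "e \<in> {1..n}" "c \<noteq> e"
    using edges_subset by blast
  then show ?thesis by (metis doubleton_eq_iff insert_absorb2 singleton_insert_inj_eq)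
qed

lemma dart_in_range: "d \<in> darts E \<Longrightarrow> fst d \<in> {1..n} \<and> snd d \<in> {1..n} \<and> fst d \<noteq> snd d"
  unfolding darts_def using edge_in_range by auto

lemma finite_darts_E: "finite (darts E)"
proof (rule finite_subset)
  show "darts E \<subseteq> {1..n} \<times> {1..n}" using dart_in_range by (auto simp: mem_Times_iff)
qed simp

lemma bij_betw_rotation: "bij_betw \<rho> (darts E) (darts E)"
  and rotation_id: "\<And>d. d \<notin> darts E \<Longrightarrow> \<rho> d = d"
  and fst_rotation: "\<And>d. d \<in> darts E \<Longrightarrow> fst (\<rho> d) = fst d"
  and rotation_transitive:
    "\<And>d d'. d \<in> darts E \<Longrightarrow> d' \<in> darts E \<Longrightarrow> fst d = fst d' \<Longrightarrow> \<exists>k. (\<rho> ^^ k) d = d'"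
  using rotation unfolding is_rotation_system_def by auto

lemma rotation_in_darts: "d \<in> darts E \<Longrightarrow> \<rho> d \<in> darts E"
  using bij_betw_rotation by (meson bij_betwE)

definition next_dart where "next_dart d = (snd d, snd (\<rho> (snd d, fst d)))"

lemma walk_0: "walk 0 = (n, m0)"
  unfolding walk_def by simp

lemma walk_Suc: "walk (Suc k) = next_dart (walk k)"
  unfolding walk_def next_dart_def by (simp add: case_prod_beta Let_def)

lemma next_dart_eq: "d \<in> darts E \<Longrightarrow> next_dart d = \<rho> (prod.swap d)"
proof -
  assume d: "d \<in> darts E"
  have "fst (\<rho> (prod.swap d)) = snd d" using fst_rotation[OF swap_in_darts[OF d]] by simp
  then show ?thesis unfolding next_dart_def by (metis prod.collapse prod.swap_def)
qed

lemma next_dart_in_darts: "d \<in> darts E \<Longrightarrow> next_dart d \<in> darts E"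
  using next_dart_eq rotation_in_darts swap_in_darts by simp

lemma inj_on_next_dart: "inj_on next_dart (darts E)"
proof (rule inj_onI)
  fix d d' assume d: "d \<in> darts E" "d' \<in> darts E" "next_dart d = next_dart d'"
  then have "\<rho> (prod.swap d) = \<rho> (prod.swap d')" using next_dart_eq by simp
  then have "prod.swap d = prod.swap d'"
    using bij_betw_rotation swap_in_darts d by (metis bij_betw_def inj_onD)
  then show "d = d'" by (metis swap_swap)
qed

lemma walk_in_darts: "walk k \<in> darts E"
proof (induction k)
  case 0
  then show ?case using marked_edge walk_0 unfolding darts_def by simp
next
  case (Suc k)
  then show ?case using next_dart_in_darts walk_Suc by simp
qed

lemma fst_walk_Suc: "fst (walk (Suc k)) = snd (walk k)"
  unfolding walk_Suc next_dart_def by simp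

lemma walk_cancel: "walk (i + k) = walk (j + k) \<Longrightarrow> walk i = walk j"
proof (induction k)
  case 0
  then show ?case by simp
next
  case (Suc k)
  then have "next_dart (walk (i + k)) = next_dart (walk (j + k))" using walk_Suc by simp
  then have "walk (i + k) = walk (j + k)" using inj_on_next_dart walk_in_darts by (meson inj_onD)
  then show ?case using Suc.IH by simp
qed

lemma walk_returns: "\<exists>p>0. walk p = walk 0"
proof -
  have "\<not> inj_on walk {..card (darts E)}"
  proof
    assume "inj_on walk {..card (darts E)}"
    then have "card (walk ` {..card (darts E)}) = Suc (card (darts E))" by (simp add: card_image)
    moreover have "walk ` {..card (darts E)} \<subseteq> darts E" using walk_in_darts by blast
    then have "card (walk ` {..card (darts E)}) \<le> card (darts E)"
      using card_mono[OF finite_darts_E] by blast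
    ultimately show False by linarith
  qed
  then obtain i j where ij: "i < j" "walk i = walk j"
    unfolding inj_on_def by (metis linorder_neqE_nat)
  then have "walk (0 + i) = walk ((j - i) + i)" by simp
  then have "walk (j - i) = walk 0" by (metis walk_cancel)
  then show ?thesis using ij(1) by (intro exI[of _ "j - i"]) simp
qed

lemma walk_add_period: "walk p = walk 0 \<Longrightarrow> walk (k + p) = walk k"
  by (induction k) (simp_all add: walk_Suc)

lemma walk_mod_period:
  assumes "walk p = walk 0"
  shows "walk k = walk (k mod p)"
proof -
  have multiple: "walk (j + t * p) = walk j" for j t
  proof (induction t)
    case 0
    then show ?case by simp
  next
    case (Suc t)
    have "walk (j + Suc t * p) = walk ((j + t * p) + p)" by (simp add: algebra_simps)
    then show ?case using walk_add_period[OF assms] Suc.IH by simp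
  qed
  then show ?thesis using multiple[of "k mod p" "k div p"] by simp
qed

text \<open>Once the walk crosses an edge \<open>{u, w}\<close> from \<open>u\<close> to \<open>w\<close>, it can only get back to the side
  of \<open>u\<close> along \<open>(w, u)\<close>, since the edge is a bridge.\<close>

lemma walk_stays_across:
  assumes i: "walk i = (u, w)" and not_back: "(w, u) \<notin> range walk"
  shows "fst (walk (Suc i + j)) \<notin> {y. (u, y) \<in> (darts (E - {{u, w}}))\<^sup>*}"
    (is "_ \<notin> ?A")
proof (induction j)
  case 0
  have "{u, w} \<in> E" using walk_in_darts[of i] i unfolding darts_def by simp
  then show ?case using fst_walk_Suc[of i] i tree_edge_is_bridge[OF tree] by simp
next
  case (Suc j)
  obtain a b where ab: "walk (Suc i + j) = (a, b)" by (cases "walk (Suc i + j)")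
  have edge: "{a, b} \<in> E" using walk_in_darts[of "Suc i + j"] ab unfolding darts_def by simp
  have a: "a \<notin> ?A" using Suc.IH ab by simp
  have "b \<notin> ?A"
  proof
    assume b: "b \<in> ?A"
    show False
    proof (cases "{a, b} = {u, w}")
      case True
      then have "(a = u \<and> b = w) \<or> (a = w \<and> b = u)" by (auto simp: doubleton_eq_iff)
      then show False
      proof
        assume "a = u \<and> b = w"
        then show False using a by simp
      next
        assume "a = w \<and> b = u"
        then have "walk (Suc i + j) = (w, u)" using ab by simp
        then show False using not_back by (metis rangeI)
      qed
    next
      case False
      then have "{b, a} \<in> E - {{u, w}}" using edge by (simp add: insert_commute)
      then show False using a b by (auto intro: rtrancl_darts_edge)
    qed
  qed
  then show ?case using fst_walk_Suc[of "Suc i + j"] ab by simp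
qed

lemma swap_in_range_walk: "d \<in> range walk \<Longrightarrow> prod.swap d \<in> range walk"
proof (rule ccontr)
  assume d: "d \<in> range walk" and not_back: "prod.swap d \<notin> range walk"
  obtain i where i: "walk i = d" using d by blast
  obtain u w where uw: "d = (u, w)" by (cases d)
  obtain p where p: "0 < p" "walk p = walk 0" using walk_returns by blast
  have "walk (Suc i + (p - 1)) = walk i" using walk_add_period[OF p(2), of i] p(1) by simp
  then have "u \<notin> {y. (u, y) \<in> (darts (E - {{u, w}}))\<^sup>*}"
    using walk_stays_across[of i u w "p - 1"] i uw not_back by simp
  then show False by simp
qed

lemma rotation_in_range_walk: "d \<in> range walk \<Longrightarrow> \<rho> d \<in> range walk"
proof -
  assume "d \<in> range walk"
  then obtain i where i: "walk i = prod.swap d" using swap_in_range_walk by (metis rangeE)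
  have "walk (Suc i) = \<rho> d"
    using walk_Suc i next_dart_eq[of "prod.swap d"] walk_in_darts[of i] by simp
  then show ?thesis by (metis rangeI)
qed

lemma funpow_rotation_in_range_walk: "d \<in> range walk \<Longrightarrow> (\<rho> ^^ k) d \<in> range walk"
  by (induction k) (auto intro: rotation_in_range_walk)

text \<open>Every dart is reached: around \<open>n\<close> by rotating the first dart, and then along the tree, since
  with a dart the walk also traverses its reverse.\<close>

lemma range_walk_eq_darts: "range walk = darts E"
proof
  show "range walk \<subseteq> darts E" using walk_in_darts by blast
  have at_vertex: "(n, x) \<in> (darts E)\<^sup>* \<Longrightarrow> \<forall>d\<in>darts E. fst d = x \<longrightarrow> d \<in> range walk" for x
  proof (induction rule: rtrancl_induct)
    case base
    show ?case
    proof (intro ballI impI)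
      fix d assume d: "d \<in> darts E" "fst d = n"
      have "(n, m0) \<in> darts E" using walk_in_darts[of 0] walk_0 by simp
      then obtain k where "(\<rho> ^^ k) (n, m0) = d" using rotation_transitive d by fastforce
      then show "d \<in> range walk"
        using funpow_rotation_in_range_walk[of "walk 0"] walk_0 by (metis rangeI)
    qed
  next
    case (step y z)
    then have reverse_walked: "(z, y) \<in> range walk" using swap_in_range_walk[of "(y, z)"] by simp
    have reverse_dart: "(z, y) \<in> darts E" using swap_in_darts[OF step(2)] by simp
    show ?case
    proof (intro ballI impI)
      fix d assume d: "d \<in> darts E" "fst d = z"
      obtain k where "(\<rho> ^^ k) (z, y) = d"
        using rotation_transitive[OF reverse_dart d(1)] d(2) by auto
      then show "d \<in> range walk" using funpow_rotation_in_range_walk[OF reverse_walked] by metis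
    qed
  qed
  show "darts E \<subseteq> range walk"
  proof
    fix d assume d: "d \<in> darts E"
    then have "(n, fst d) \<in> (darts E)\<^sup>*" using connected dart_in_range by blast
    then show "d \<in> range walk" using at_vertex d by blast
  qed
qed

lemma card_darts_E: "card (darts E) = m"
proof -
  have "card (darts E) = 2 * card E"
    using finite_darts_E edges_subset by (intro card_darts) blast+
  then show ?thesis using card_E n_ge_2 by simp
qed

lemma inj_on_walk: "inj_on walk {..<m}"
proof (rule ccontr)
  assume "\<not> inj_on walk {..<m}"
  then obtain i j where ij: "i < m" "j < m" "i < j" "walk i = walk j"
    unfolding inj_on_def by (metis lessThan_iff linorder_neqE_nat)
  have "walk (0 + i) = walk ((j - i) + i)" using ij by simp
  then have p: "walk (j - i) = walk 0" by (metis walk_cancel)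
  have "range walk \<subseteq> walk ` {..<j - i}"
  proof
    fix d assume "d \<in> range walk"
    then obtain k where "d = walk k" by blast
    then have "d = walk (k mod (j - i))" using walk_mod_period[OF p] by simp
    then show "d \<in> walk ` {..<j - i}" using ij(3) by simp
  qed
  then have "card (range walk) \<le> j - i"
    by (metis card_image_le card_lessThan card_mono finite_imageI
    finite_lessThan order_trans)
  then show False using range_walk_eq_darts card_darts_E ij by simp
qed

lemma darts_eq_walk_image: "darts E = walk ` {..<m}"
proof -
  have sub: "walk ` {..<m} \<subseteq> darts E" using walk_in_darts by blast
  have "card (walk ` {..<m}) = m" using inj_on_walk by (simp add: card_image)
  then show ?thesis using card_subset_eq[OF finite_darts_E sub] card_darts_E by simp
qed

lemma walk_m: "walk m = walk 0"
proof -
  obtain j where j: "j < m" "walk m = walk j"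
    using darts_eq_walk_image walk_in_darts[of m] by (metis imageE lessThan_iff)
  show ?thesis
  proof (cases "j = 0")
    case True
    then show ?thesis using j by simp
  next
    case False
    have "walk ((m - j) + j) = walk (0 + j)" using j by simp
    then have "walk (m - j) = walk 0" by (rule walk_cancel)
    moreover have "m - j < m" "m - j \<noteq> 0" using False j by auto
    ultimately show ?thesis using inj_on_walk by (metis inj_onD lessThan_iff zero_less_iff_neq_zero)
  qed
qed

definition walk_vertex where "walk_vertex k = fst (walk k)"

lemma walk_eq_vertices: "walk k = (walk_vertex k, walk_vertex (Suc k))"
  unfolding walk_vertex_def using fst_walk_Suc[of k] by (metis prod.collapse)

lemma walk_vertex_in_range: "walk_vertex k \<in> {1..n}"
  unfolding walk_vertex_def using dart_in_range[OF walk_in_darts] by blast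

lemma walk_vertex_0: "walk_vertex 0 = n"
  unfolding walk_vertex_def walk_0 by simp

lemma walk_vertex_m: "walk_vertex m = n"
  unfolding walk_vertex_def walk_m walk_0 by simp

lemma walk_vertex_Suc_ne: "walk_vertex k \<noteq> walk_vertex (Suc k)"
  using dart_in_range[OF walk_in_darts[of k]] walk_eq_vertices[of k] by simp

lemma walk_eq_imp_eq: "i < m \<Longrightarrow> j < m \<Longrightarrow> walk i = walk j \<Longrightarrow> i = j"
  using inj_on_walk by (meson inj_onD lessThan_iff)

lemma exists_arrival: "x \<in> {1..<n} \<Longrightarrow> \<exists>k<m. walk_vertex (Suc k) = x"
proof -
  assume x: "x \<in> {1..<n}"
  then have "(n, x) \<in> (darts E)\<^sup>*" "x \<noteq> n" using connected by auto
  then obtain y where "(y, x) \<in> darts E" by (metis rtranclE)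
  then obtain k where "k < m" "walk k = (y, x)"
    using darts_eq_walk_image by (metis imageE lessThan_iff)
  then show ?thesis using walk_eq_vertices[of k] by auto
qed

definition first_arrival where "first_arrival x = (LEAST k. walk_vertex (Suc k) = x)"
definition tree_parent where "tree_parent x = walk_vertex (first_arrival x)"

lemma first_arrival: "x \<in> {1..<n} \<Longrightarrow> walk_vertex (Suc (first_arrival x)) = x \<and> first_arrival x < m"
proof -
  assume x: "x \<in> {1..<n}"
  obtain k where k: "k < m" "walk_vertex (Suc k) = x" using exists_arrival[OF x] by blast
  have "walk_vertex (Suc (first_arrival x)) = x" unfolding first_arrival_def
    using k(2) by (rule LeastI)
  moreover have "first_arrival x \<le> k" unfolding first_arrival_def using k(2) by (rule Least_le)
  ultimately show ?thesis using k(1) by simp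
qed

lemma first_arrival_le: "x \<in> {1..<n} \<Longrightarrow> walk_vertex k = x \<Longrightarrow> Suc (first_arrival x) \<le> k"
proof (cases k)
  case 0
  then show "x \<in> {1..<n} \<Longrightarrow> walk_vertex k = x \<Longrightarrow> Suc (first_arrival x) \<le> k"
    using walk_vertex_0 by simp
next
  case (Suc k')
  then show "x \<in> {1..<n} \<Longrightarrow> walk_vertex k = x \<Longrightarrow> Suc (first_arrival x) \<le> k"
    unfolding first_arrival_def by (simp add: Least_le)
qed

lemma walk_first_arrival: "x \<in> {1..<n} \<Longrightarrow> walk (first_arrival x) = (tree_parent x, x)"
  using walk_eq_vertices first_arrival unfolding tree_parent_def by simp

lemma parent_edge: "x \<in> {1..<n} \<Longrightarrow> {x, tree_parent x} \<in> E"
  using walk_in_darts[of "first_arrival x"] walk_first_arrival[of x] unfolding darts_def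
  by (simp add: insert_commute)

definition return_step where "return_step x = (SOME j. j < m \<and> walk j = (x, tree_parent x))"

lemma return_step: "x \<in> {1..<n} \<Longrightarrow> return_step x < m \<and> walk (return_step x) = (x, tree_parent x)"
proof -
  assume x: "x \<in> {1..<n}"
  have "(x, tree_parent x) \<in> darts E" using parent_edge[OF x] unfolding darts_def by simp
  then have "\<exists>j. j < m \<and> walk j = (x, tree_parent x)"
    using darts_eq_walk_image by (metis imageE lessThan_iff)
  then show ?thesis unfolding return_step_def by (rule someI_ex)
qed

definition subtree where "subtree x = {y. (x, y) \<in> (darts (E - {{x, tree_parent x}}))\<^sup>*}"

lemma parent_not_in_subtree: "x \<in> {1..<n} \<Longrightarrow> tree_parent x \<notin> subtree x"
  unfolding subtree_def using tree_edge_is_bridge[OF tree parent_edge] by simp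

lemma self_in_subtree: "x \<in> subtree x"
  unfolding subtree_def by simp

lemma leaves_subtree_at_return:
  assumes x: "x \<in> {1..<n}"
    and k: "k < m" "walk_vertex k \<in> subtree x" "walk_vertex (Suc k) \<notin> subtree x"
  shows "k = return_step x"
proof -
  define a b where "a = walk_vertex k" and "b = walk_vertex (Suc k)"
  have edge: "{a, b} \<in> E"
    using walk_in_darts[of k] walk_eq_vertices[of k] unfolding a_def b_def darts_def by simp
  have "{a, b} = {x, tree_parent x}"
  proof (rule ccontr)
    assume "{a, b} \<noteq> {x, tree_parent x}"
    then have "b \<in> subtree x"
      using k(2) edge unfolding subtree_def a_def by (auto intro: rtrancl_darts_edge)
    then show False using k(3) b_def by simp
  qed
  moreover have "a \<noteq> tree_parent x" using k(2) parent_not_in_subtree[OF x] a_def by auto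
  ultimately have "a = x \<and> b = tree_parent x" by (metis doubleton_eq_iff)
  then have "walk k = walk (return_step x)"
    using walk_eq_vertices[of k] return_step[OF x] a_def b_def by simp
  then show ?thesis using walk_eq_imp_eq k(1) return_step[OF x] by blast
qed

lemma enters_subtree_at_first_arrival:
  assumes x: "x \<in> {1..<n}"
    and k: "k < m" "walk_vertex k \<notin> subtree x" "walk_vertex (Suc k) \<in> subtree x"
  shows "k = first_arrival x"
proof -
  define a b where "a = walk_vertex k" and "b = walk_vertex (Suc k)"
  have edge: "{a, b} \<in> E"
    using walk_in_darts[of k] walk_eq_vertices[of k] unfolding a_def b_def darts_def by simp
  have "{a, b} = {x, tree_parent x}"
  proof (rule ccontr)
    assume "{a, b} \<noteq> {x, tree_parent x}"
    then have "{b, a} \<in> E - {{x, tree_parent x}}" using edge by (simp add: insert_commute)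
    then have "a \<in> subtree x"
      using k(3) unfolding subtree_def b_def by (auto intro: rtrancl_darts_edge)
    then show False using k(2) a_def by simp
  qed
  moreover have "a \<noteq> x" using k(2) self_in_subtree a_def by auto
  ultimately have "a = tree_parent x \<and> b = x" by (metis doubleton_eq_iff)
  then have "walk k = walk (first_arrival x)"
    using walk_eq_vertices[of k] walk_first_arrival[OF x] a_def b_def by simp
  then show ?thesis using walk_eq_imp_eq k(1) first_arrival[OF x] by blast
qed

lemma root_not_in_subtree: "x \<in> {1..<n} \<Longrightarrow> n \<notin> subtree x"
proof
  assume x: "x \<in> {1..<n}" and "n \<in> subtree x"
  then have "walk_vertex 0 \<in> subtree x" using walk_vertex_0 by simp
  moreover have "walk_vertex (first_arrival x) \<notin> subtree x"
    using parent_not_in_subtree[OF x] unfolding tree_parent_def .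
  ultimately obtain k where
      k: "k < first_arrival x" "walk_vertex k \<in> subtree x" "walk_vertex (Suc k) \<notin> subtree x"
    using exists_crossing_step[of "\<lambda>k. walk_vertex k \<in> subtree x" 0 "first_arrival x"] by auto
  then have "k = return_step x" using leaves_subtree_at_return[OF x] first_arrival[OF x] by simp
  then have "walk_vertex k = x" using return_step[OF x] walk_eq_vertices[of "return_step x"] by simp
  then show False using first_arrival_le[OF x] k(1) by fastforce
qed

lemma first_arrival_less_return: "x \<in> {1..<n} \<Longrightarrow> first_arrival x < return_step x"
proof -
  assume x: "x \<in> {1..<n}"
  have "walk_vertex (return_step x) = x"
    using return_step[OF x] walk_eq_vertices[of "return_step x"] by simp
  then show ?thesis using first_arrival_le[OF x] by fastforce
qed

lemma outside_before_first_arrival: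
  "x \<in> {1..<n} \<Longrightarrow> k \<le> first_arrival x \<Longrightarrow> walk_vertex k \<notin> subtree x"
proof
  assume x: "x \<in> {1..<n}" and k: "k \<le> first_arrival x" and inside: "walk_vertex k \<in> subtree x"
  have "walk_vertex 0 \<notin> subtree x" using root_not_in_subtree[OF x] walk_vertex_0 by simp
  then obtain k' where k': "k' < k" "walk_vertex k' \<notin> subtree x" "walk_vertex (Suc k') \<in> subtree x"
    using exists_crossing_step[of "\<lambda>k. walk_vertex k \<notin> subtree x" 0 k] inside by auto
  have "k' = first_arrival x"
    using enters_subtree_at_first_arrival[OF x _ k'(2,3)] k'(1) k first_arrival[OF x] by simp
  then show False using k'(1) k by simp
qed

lemma inside_until_return:
  "x \<in> {1..<n} \<Longrightarrow> Suc (first_arrival x) \<le> k \<Longrightarrow> k \<le> return_step x \<Longrightarrow> walk_vertex k \<in> subtree x"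
proof (rule ccontr)
  assume x: "x \<in> {1..<n}" and k: "Suc (first_arrival x) \<le> k" "k \<le> return_step x"
    and outside: "walk_vertex k \<notin> subtree x"
  have "walk_vertex (Suc (first_arrival x)) \<in> subtree x"
    using first_arrival[OF x] self_in_subtree by simp
  then obtain k' where k': "Suc (first_arrival x) \<le> k'" "k' < k" "walk_vertex k' \<in> subtree x"
      "walk_vertex (Suc k') \<notin> subtree x"
    using exists_crossing_step[of "\<lambda>k. walk_vertex k \<in> subtree x" "Suc (first_arrival x)" k]
      outside k by auto
  have "k' = return_step x"
    using leaves_subtree_at_return[OF x _ k'(3,4)] k'(2) k return_step[OF x] by simp
  then show False using k'(2) k by simp
qed

lemma outside_after_return:
  "x \<in> {1..<n} \<Longrightarrow> Suc (return_step x) \<le> k \<Longrightarrow> k \<le> m \<Longrightarrow> walk_vertex k \<notin> subtree x"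
proof
  assume x: "x \<in> {1..<n}" and k: "Suc (return_step x) \<le> k" "k \<le> m"
    and inside: "walk_vertex k \<in> subtree x"
  have "walk_vertex (Suc (return_step x)) \<notin> subtree x"
    using return_step[OF x] walk_eq_vertices[of "return_step x"] parent_not_in_subtree[OF x] by simp
  then obtain k' where k': "Suc (return_step x) \<le> k'" "k' < k" "walk_vertex k' \<notin> subtree x"
      "walk_vertex (Suc k') \<in> subtree x"
    using exists_crossing_step[of "\<lambda>k. walk_vertex k \<notin> subtree x" "Suc (return_step x)" k] inside k
      by auto
  have "k' = first_arrival x" using enters_subtree_at_first_arrival[OF x _ k'(3,4)] k'(2) k by simp
  then show False using k'(1) first_arrival_less_return[OF x] by simp
qed

lemma contour_walk_walk_vertex: "contour_walk n walk_vertex return_step first_arrival tree_parent"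
proof
  show "2 \<le> n" by (rule n_ge_2)
  show "\<And>k. k \<le> m \<Longrightarrow> walk_vertex k \<in> {1..n}" using walk_vertex_in_range by blast
  show "walk_vertex 0 = n" by (rule walk_vertex_0)
  show "walk_vertex m = n" by (rule walk_vertex_m)
  show "\<And>i. i < m \<Longrightarrow> walk_vertex i \<noteq> walk_vertex (Suc i)" using walk_vertex_Suc_ne by blast
  show "\<And>x. x \<in> {1..<n} \<Longrightarrow> first_arrival x < return_step x \<and> return_step x < m"
    using first_arrival_less_return return_step by blast
  show "\<And>x. x \<in> {1..<n} \<Longrightarrow>
      walk_vertex (return_step x) = x \<and> walk_vertex (Suc (return_step x)) = tree_parent x"
    using return_step walk_eq_vertices by (metis prod.inject)
  show "\<And>x. x \<in> {1..<n} \<Longrightarrow>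
      walk_vertex (first_arrival x) = tree_parent x \<and> walk_vertex (Suc (first_arrival x)) = x"
    using first_arrival unfolding tree_parent_def by blast
  show "\<And>x k. x \<in> {1..<n} \<Longrightarrow> k \<le> m \<Longrightarrow> k \<le> first_arrival x \<or> Suc (return_step x) \<le> k \<Longrightarrow>
      walk_vertex k \<noteq> x"
    using outside_before_first_arrival outside_after_return self_in_subtree by metis
  show "\<And>x k. x \<in> {1..<n} \<Longrightarrow> Suc (first_arrival x) \<le> k \<Longrightarrow> k \<le> return_step x \<Longrightarrow>
      walk_vertex k \<noteq> tree_parent x"
    using inside_until_return parent_not_in_subtree by metis
qed

lemma r_T_eq_walk_refls: "r_T n (E, \<rho>, m0) = contour_walk.walk_refls n walk_vertex"
proof -
  interpret C: contour_walk n walk_vertex return_step first_arrival tree_parent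
    by (rule contour_walk_walk_vertex)
  show ?thesis unfolding r_T_def C.walk_refls_def
    using walk_eq_vertices unfolding walk_def step_refl_def by (auto intro!: map_cong)
qed

end

lemma r_T_tree_like_factorization:
  assumes n: "2 \<le> n" and T: "T \<in> E_marked n"
  shows "r_T n T \<in> fact_lambda n \<and> tree_like n (r_T n T)"
proof -
  obtain E \<rho> m0 where T_eq: "T = (E, \<rho>, m0)" by (cases T)
  interpret marked_plane_tree n E \<rho> m0 using n T T_eq by unfold_locales auto
  interpret C: contour_walk n walk_vertex return_step first_arrival tree_parent
    by (rule contour_walk_walk_vertex)
  show ?thesis
    using T_eq r_T_eq_walk_refls C.walk_refls_in_fact_lambda C.tree_like_walk_refls by simp
qed

context marked_plane_tree
begin

lemma nth_r_T: "k < m \<Longrightarrow> r_T n (E, \<rho>, m0) ! k = step_refl n (walk_vertex k) (walk_vertex (Suc k))"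
proof -
  interpret C: contour_walk n walk_vertex return_step first_arrival tree_parent
    by (rule contour_walk_walk_vertex)
  show "k < m \<Longrightarrow> ?thesis" using r_T_eq_walk_refls unfolding C.walk_refls_def by simp
qed

lemma rotation_along_walk:
  assumes "d \<in> darts E"
  obtains k where "k < m" "walk k = prod.swap d" "walk (Suc k) = \<rho> d"
proof -
  obtain k where k: "k < m" "walk k = prod.swap d"
    using swap_in_darts[OF assms] darts_eq_walk_image by (metis imageE lessThan_iff)
  then have "walk (Suc k) = \<rho> d" using walk_Suc next_dart_eq[OF walk_in_darts[of k]] by simp
  then show ?thesis using that k by blast
qed

end

lemma walk_dart_eq_if_r_T_eq:
  assumes n: "2 \<le> n" and T: "(E, \<rho>, m0) \<in> E_marked n" and T': "(E', \<rho>', m0') \<in> E_marked n"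
    and eq: "r_T n (E, \<rho>, m0) = r_T n (E', \<rho>', m0')" and k: "k \<le> 2*n-2"
  shows "walk_dart n \<rho> m0 k = walk_dart n \<rho>' m0' k"
proof -
  interpret A: marked_plane_tree n E \<rho> m0 using n T by unfold_locales
  interpret B: marked_plane_tree n E' \<rho>' m0' using n T' by unfold_locales
  have walk: "A.walk k = B.walk k" if k: "k < 2*n-2" for k
  proof -
    have "step_refl n (A.walk_vertex k) (A.walk_vertex (Suc k))
        = step_refl n (B.walk_vertex k) (B.walk_vertex (Suc k))"
      using eq A.nth_r_T[OF k] B.nth_r_T[OF k] by simp
    then have "A.walk_vertex k = B.walk_vertex k \<and> A.walk_vertex (Suc k) = B.walk_vertex (Suc k)"
      using step_refl_inj A.walk_vertex_in_range B.walk_vertex_in_range A.walk_vertex_Suc_ne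
        B.walk_vertex_Suc_ne by blast
    then show ?thesis using A.walk_eq_vertices B.walk_eq_vertices by simp
  qed
  show ?thesis
  proof (cases "k = 2*n-2")
    case True
    then show ?thesis using A.walk_m B.walk_m walk[of 0] n unfolding A.walk_def B.walk_def by simp
  next
    case False
    then show ?thesis using walk k unfolding A.walk_def B.walk_def by simp
  qed
qed

text \<open>The walk, and hence \<open>r\<^sup>T\<close>, determines the tree: its darts give the edges, and consecutive
  darts give the rotation.\<close>

lemma r_T_inj:
  assumes n: "2 \<le> n" and T: "(E, \<rho>, m0) \<in> E_marked n" and T': "(E', \<rho>', m0') \<in> E_marked n"
    and eq: "r_T n (E, \<rho>, m0) = r_T n (E', \<rho>', m0')"
  shows "(E, \<rho>, m0) = (E', \<rho>', m0')"
proof -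
  interpret A: marked_plane_tree n E \<rho> m0 using n T by unfold_locales
  interpret B: marked_plane_tree n E' \<rho>' m0' using n T' by unfold_locales
  have walk: "A.walk k = B.walk k" if "k \<le> 2*n-2" for k
    using walk_dart_eq_if_r_T_eq[OF n T T' eq that] unfolding A.walk_def B.walk_def .
  have darts: "darts E = darts E'" using A.darts_eq_walk_image B.darts_eq_walk_image walk by auto
  have edges: "F = (\<lambda>d. {fst d, snd d}) ` darts F"
    if "F \<subseteq> {{a, b} |a b. a \<in> {1..n} \<and> b \<in> {1..n} \<and> a \<noteq> b}" for F
    using that by (intro edges_eq_image_darts) blast
  have "E = (\<lambda>d. {fst d, snd d}) ` darts E" by (rule edges[OF A.edges_subset])
  also have "\<dots> = E'" using darts edges[OF B.edges_subset] by simp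
  finally have "E = E'" .
  moreover have "m0 = m0'" using walk[of 0] A.walk_0 B.walk_0 by simp
  moreover have "\<rho> d = \<rho>' d" for d
  proof (cases "d \<in> darts E")
    case False
    then show ?thesis using A.rotation_id B.rotation_id darts by metis
  next
    case True
    then obtain k where k: "k < 2*n-2" "A.walk k = prod.swap d" "A.walk (Suc k) = \<rho> d"
      by (rule A.rotation_along_walk)
    have "B.walk k = prod.swap d" using walk[of k] k(1,2) by simp
    then have "B.walk (Suc k) = \<rho>' d"
      using B.walk_Suc B.next_dart_eq[OF B.walk_in_darts[of k]] by simp
    then show ?thesis using walk[of "Suc k"] k(1,3) by simp
  qed
  ultimately show ?thesis by auto
qed

text \<open>Shifting both ends of \<open>((a\<^sub>k\<^sub>-\<^sub>1, b\<^sub>k))\<close> by the same multiple of \<open>n\<close> does not change the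
  reflection, and the shifts can be chosen to make \<open>a\<^sub>k = b\<^sub>k\<close> for all \<open>k\<close>.\<close>

lemma tree_like_chain:
  assumes "tree_like n rs"
  obtains c where "\<And>i. i < 2*n-2 \<Longrightarrow> c i < c (Suc i) \<and> c i mod int n \<noteq> c (Suc i) mod int n"
    "rs = map (\<lambda>i. aff_refl n (c i) (c (Suc i))) [0..<2*n-2]"
proof -
  let ?m = "2*n-2"
  obtain a b :: "nat \<Rightarrow> int" where
    len: "length rs = ?m" and
    ab: "\<forall>k\<in>{1..2*n-2}. a (k-1) < b k \<and> a (k-1) mod int n \<noteq> b k mod int n
                          \<and> rs ! (k-1) = aff_refl n (a (k-1)) (b k)" and
    ab_mod: "\<forall>k\<in>{1..2*n-3}. a k mod int n = b k mod int n"
    using assms unfolding tree_like_def by blast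
  have ab_step: "a i < b (Suc i) \<and> a i mod int n \<noteq> b (Suc i) mod int n \<and>
      rs ! i = aff_refl n (a i) (b (Suc i))"
    if "i < ?m" for i
    using ab[rule_format, of "Suc i"] that by simp
  define c where "c k = a 0 + (\<Sum>i<k. b (Suc i) - a i)" for k
  have c_Suc: "c (Suc i) = c i + (b (Suc i) - a i)" for i unfolding c_def by simp
  have c_mod: "c i mod int n = a i mod int n" if "i < ?m" for i
    using that
  proof (induction i)
    case 0
    then show ?case unfolding c_def by simp
  next
    case (Suc i)
    have "c (Suc i) mod int n = (a i + (b (Suc i) - a i)) mod int n"
      unfolding c_Suc using Suc by (metis mod_add_left_eq Suc_lessD)
    also have "\<dots> = a (Suc i) mod int n" using ab_mod[rule_format, of "Suc i"] Suc.prems by simp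
    finally show ?case .
  qed
  have c_Suc_mod: "c (Suc i) mod int n = b (Suc i) mod int n" if "i < ?m" for i
  proof -
    have "c (Suc i) mod int n = (a i + (b (Suc i) - a i)) mod int n"
      unfolding c_Suc using c_mod[OF that] by (metis mod_add_left_eq)
    then show ?thesis by simp
  qed
  have nth: "rs ! i = aff_refl n (c i) (c (Suc i))" if "i < ?m" for i
    using aff_refl_cong[of "c i" n "a i" "c (Suc i)" "b (Suc i)"] c_mod[OF that] c_Suc
      ab_step[OF that]
    by simp
  have "rs = map (\<lambda>i. aff_refl n (c i) (c (Suc i))) [0..<?m]"
    by (rule nth_equalityI) (use len nth in auto)
  moreover have "c i < c (Suc i) \<and> c i mod int n \<noteq> c (Suc i) mod int n" if "i < ?m" for i
    using ab_step[OF that] c_Suc c_mod[OF that] c_Suc_mod[OF that] by simp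
  ultimately show ?thesis using that by blast
qed

lemma tree_like_lambda_chain:
  assumes n: "2 \<le> n" and rs: "rs \<in> fact_lambda n" "tree_like n rs"
  obtains c where "lambda_chain n c" "rs = map (\<lambda>i. aff_refl n (c i) (c (Suc i))) [0..<2*n-2]"
proof -
  obtain c where c: "\<And>i. i < 2*n-2 \<Longrightarrow> c i < c (Suc i) \<and> c i mod int n \<noteq> c (Suc i) mod int n"
      "rs = map (\<lambda>i. aff_refl n (c i) (c (Suc i))) [0..<2*n-2]"
    using tree_like_chain[OF rs(2)] by blast
  have "lambda_chain n c"
  proof
    show "2 \<le> n" by (rule n)
    show "\<And>i. i < 2*n-2 \<Longrightarrow> c i < c (Suc i)"
      and "\<And>i. i < 2*n-2 \<Longrightarrow> c i mod int n \<noteq> c (Suc i) mod int n"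
      using c(1) by simp_all
    show "prod_refl (map (\<lambda>i. aff_refl n (c i) (c (Suc i))) [0..<2*n-2]) = lambda_n n"
      using rs(1) c(2) unfolding fact_lambda_def by simp
  qed
  then show ?thesis using that c(2) by blast
qed

lemma (in lambda_chain) walk_refls_chain_vertex:
  "contour_walk.walk_refls n chain_vertex = map (\<lambda>i. aff_refl n (c i) (c (Suc i))) [0..<m]"
proof -
  interpret W: contour_walk n chain_vertex last_move first_move
      "\<lambda>x. chain_vertex (Suc (last_move x))"
    by (rule contour_walk_chain_vertex)
  have "step_refl n (chain_vertex k) (chain_vertex (Suc k)) = aff_refl n (c k) (c (Suc k))"
    if k: "k < m" for k
  proof (rule aff_refl_eq_step_refl[symmetric])
    show "0 < n" by (rule n_pos)
    show "chain_vertex k \<in> {1..n}" "chain_vertex (Suc k) \<in> {1..n}"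
      using class_vertex_in_range n_pos by auto
    show "chain_vertex k \<noteq> chain_vertex (Suc k)" using W.walk_step_ne[OF k] .
    show "c k mod int n = int (chain_vertex k) mod int n" using class_vertex_mod n_pos by simp
    show "c (Suc k) - c k = (int (chain_vertex (Suc k)) - int (chain_vertex k)) mod int n"
      using gap_eq_step_mod[OF k] unfolding gap_def .
  qed
  then show ?thesis unfolding W.walk_refls_def by (auto intro!: map_cong)
qed

lemma tree_like_in_image_r_T:
  assumes n: "2 \<le> n" and rs: "rs \<in> fact_lambda n" "tree_like n rs"
  shows "rs \<in> r_T n ` E_marked n"
proof -
  obtain c where c: "lambda_chain n c"
    and rs_eq: "rs = map (\<lambda>i. aff_refl n (c i) (c (Suc i))) [0..<2*n-2]"
    using tree_like_lambda_chain[OF n rs] by blast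
  interpret C: lambda_chain n c by (rule c)
  interpret W: contour_walk n C.chain_vertex C.last_move C.first_move
      "\<lambda>x. C.chain_vertex (Suc (C.last_move x))"
    by (rule C.contour_walk_chain_vertex)
  show ?thesis using W.walk_tree_in_E_marked W.r_T_walk_tree C.walk_refls_chain_vertex rs_eq
    by (metis image_eqI)
qed

theorem theorem3p10:
  fixes n :: nat
  assumes "n \<ge> 2"
  shows "(\<forall>T \<in> E_marked n. r_T n T \<in> fact_lambda n \<and> tree_like n (r_T n T)) \<and>
         bij_betw (r_T n) (E_marked n) {rs \<in> fact_lambda n. tree_like n rs}"
proof -
  have factorization: "\<forall>T \<in> E_marked n. r_T n T \<in> fact_lambda n \<and> tree_like n (r_T n T)"
    using r_T_tree_like_factorization[OF assms] by blast
  moreover have "inj_on (r_T n) (E_marked n)"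
    using r_T_inj[OF assms] by (intro inj_onI) (metis prod_cases3)
  moreover have "r_T n ` E_marked n = {rs \<in> fact_lambda n. tree_like n rs}"
    using factorization tree_like_in_image_r_T[OF assms] by blast
  ultimately show ?thesis unfolding bij_betw_def by blast
qed

end
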